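(* Let $\varphi:\mathbb{C}^n\to\mathbb{R}$ be an admissible weight with maximal eigenvalue radius function $\rho$. There is a constant $C$ depending only on $\varphi$ such that for every $z\in\mathbb{C}^n$, every $0<r\le\rho(z)$ and every holomorphic $h:B(z,r)\to\mathbb{C}$, $$|h(z)|^2e^{-2\varphi(z)}\le\frac{C}{|B(z,r)|}\int_{B(z,r)}|h|^2e^{-2\varphi}.$$
   Context: A $C^2$ function $\varphi:\mathbb{C}^n\to\mathbb{R}$ is plurisubharmonic if its complex Hessian $(\partial^2\varphi/\partial z_j\partial\bar z_k)$ is positive semidefinite everywhere. It is admissible if it is $C^2$, plurisubharmonic, and (a) there is $D<\infty$ with $\sup_{B(z,2r)}\Delta\varphi\le D\sup_{B(z,r)}\Delta\varphi$ for all $z\in\mathbb{C}^n$, $r>0$ ($\Delta$ the Euclidean Laplacian on $\mathbb{C}^n\cong\mathbb{R}^{2n}$, $B$ Euclidean balls, $|B|$ Lebesgue measure), and (b) there is $c>0$ with $\inf_{z}\sup_{w\in B(z,c)}\Delta\varphi(w)>0$. Its maximal eigenvalue radius function is $\rho(z)=\sup\{r>0:\sup_{w\in B(z,r)}\Delta\varphi(w)\le r^{-2}\}$. *)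

theory Defs
  imports "HOL-Analysis.Analysis"
begin

text \<open>Points of C^n are modelled as complex ^ 'n for a finite index type 'n
(so n = CARD('n) is arbitrary); this is a euclidean_space of real dimension 2n.\<close>

definition C2 :: "(complex ^ 'n :: finite \<Rightarrow> real) \<Rightarrow> bool" where
  "C2 f \<longleftrightarrow> (\<exists>Df :: complex ^ 'n \<Rightarrow> ((complex ^ 'n) \<Rightarrow>\<^sub>L real).
     \<exists>D2f :: complex ^ 'n \<Rightarrow> ((complex ^ 'n) \<Rightarrow>\<^sub>L ((complex ^ 'n) \<Rightarrow>\<^sub>L real)).
       (\<forall>x. (f has_derivative blinfun_apply (Df x)) (at x)) \<and>
       (\<forall>x. (Df has_derivative blinfun_apply (D2f x)) (at x)) \<and>
       continuous_on UNIV D2f)"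

definition d2 :: "(complex ^ 'n :: finite \<Rightarrow> real) \<Rightarrow> complex ^ 'n \<Rightarrow> complex ^ 'n \<Rightarrow> complex ^ 'n \<Rightarrow> real" where
  "d2 f x u v = deriv (\<lambda>s. deriv (\<lambda>t. f (x + t *\<^sub>R u + s *\<^sub>R v)) 0) 0"

text \<open>Euclidean Laplacian on C^n = R^2n (sum over the standard real basis
x_j = axis j 1, y_j = axis j i).\<close>
definition laplacian :: "(complex ^ 'n :: finite \<Rightarrow> real) \<Rightarrow> complex ^ 'n \<Rightarrow> real" where
  "laplacian f x = (\<Sum>b\<in>Basis. d2 f x b b)"

text \<open>Complex Hessian entry d^2 f / (dz_j d(conj z_k)), with
d/dz_j = (d/dx_j - i d/dy_j)/2 and d/d(conj z_k) = (d/dx_k + i d/dy_k)/2.\<close>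
definition complex_hessian :: "(complex ^ 'n :: finite \<Rightarrow> real) \<Rightarrow> complex ^ 'n \<Rightarrow> 'n \<Rightarrow> 'n \<Rightarrow> complex" where
  "complex_hessian f x j k =
     (let ex = (\<lambda>i. axis i (1::complex)); ey = (\<lambda>i. axis i \<i>) in
      (complex_of_real (d2 f x (ex k) (ex j) + d2 f x (ey k) (ey j))
       + \<i> * complex_of_real (d2 f x (ey k) (ex j) - d2 f x (ex k) (ey j))) / 4)"

definition plurisubharmonic :: "(complex ^ 'n :: finite \<Rightarrow> real) \<Rightarrow> bool" where
  "plurisubharmonic f \<longleftrightarrow> (\<forall>x. \<forall>w :: complex ^ 'n.
     (let q = (\<Sum>j\<in>UNIV. \<Sum>k\<in>UNIV. complex_hessian f x j k * w $ j * cnj (w $ k))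
      in Im q = 0 \<and> 0 \<le> Re q))"

definition admissible :: "(complex ^ 'n :: finite \<Rightarrow> real) \<Rightarrow> bool" where
  "admissible f \<longleftrightarrow> C2 f \<and> plurisubharmonic f \<and>
     (\<exists>D::real. (\<forall>z r. r > 0 \<longrightarrow>
        (SUP w\<in>ball z (2*r). laplacian f w) \<le> D * (SUP w\<in>ball z r. laplacian f w))) \<and>
     (\<exists>c::real. c > 0 \<and> (INF z. SUP w\<in>ball z c. laplacian f w) > 0)"

definition rho :: "(complex ^ 'n :: finite \<Rightarrow> real) \<Rightarrow> complex ^ 'n \<Rightarrow> real" where
  "rho f z = Sup {r. r > 0 \<and> (SUP w\<in>ball z r. laplacian f w) \<le> 1 / r\<^sup>2}"

definition cscale :: "complex \<Rightarrow> complex ^ 'n :: finite \<Rightarrow> complex ^ 'n" where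
  "cscale c v = (\<chi> i. c * v $ i)"

definition holomorphic_n :: "(complex ^ 'n :: finite \<Rightarrow> complex) \<Rightarrow> (complex ^ 'n) set \<Rightarrow> bool" where
  "holomorphic_n h S \<longleftrightarrow> (\<forall>x\<in>S. \<exists>L. (h has_derivative L) (at x) \<and>
      (\<forall>c v. L (cscale c v) = c * L v))"

end

theory Submission
  imports Defs "HOL-Complex_Analysis.Cauchy_Integral_Formula"
begin

text \<open>Fix \<open>z\<close> and \<open>0 < r \<le> \<rho>(z)\<close>, so that \<open>\<Delta>\<phi> \<le> 1/r^2\<close> on \<open>B(z, r)\<close>. A positive
  semidefinite form is dominated by a multiple of its trace, so plurisubharmonicity bounds the
  second derivative of \<open>\<phi>\<close> along a complex line \<open>l \<mapsto> z + l v\<close> with \<open>|v| < r\<close> by a multiple of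
  \<open>|v|^2 \<Delta>\<phi> \<le> 1\<close>. Hence, for \<open>K = (2n)^2\<close>, the function \<open>|h|^2 exp (-2\<phi> + K |l|^2)\<close> is
  subharmonic on the unit disc of that line, and the sub-mean-value inequality bounds
  \<open>|h(z)|^2 exp (-2\<phi>(z))\<close> by \<open>exp K\<close> times the mean of \<open>|h|^2 exp (-2\<phi>)\<close> over the circle
  \<open>z + e^(i\<theta>) v\<close>. Averaging over \<open>v \<in> B(0, r)\<close>, using that the rotations
  \<open>w \<mapsto> z + e^(i\<theta>) (w - z)\<close> preserve Lebesgue measure, gives the estimate with \<open>C = exp K\<close>.\<close>

section \<open>Sub-mean-value inequality in the plane\<close>

lemma has_real_derivative_compose_planar:
  assumes "(G has_derivative (\<lambda>w. Re w * a + Im w * b)) (at (\<gamma> t))"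
    and "(\<gamma> has_vector_derivative d) (at t)"
  shows "((\<lambda>t. G (\<gamma> t)) has_real_derivative (Re d * a + Im d * b)) (at t)"
proof -
  have "((G \<circ> \<gamma>) has_derivative ((\<lambda>w. Re w * a + Im w * b) \<circ> (\<lambda>x. x *\<^sub>R d))) (at t)"
    using assms(2) unfolding has_vector_derivative_def
    by (rule diff_chain_at) (use assms(1) in auto)
  moreover have "(\<lambda>w. Re w * a + Im w * b) \<circ> (\<lambda>x. x *\<^sub>R d) = (\<lambda>x. (Re d * a + Im d * b) * x)"
    by (auto simp: algebra_simps)
  ultimately show ?thesis unfolding has_field_derivative_def by (simp add: o_def)
qed

lemma has_integral_real_derivative:
  assumes "a \<le> b" and "\<And>x. x \<in> {a..b} \<Longrightarrow> (f has_real_derivative f' x) (at x)"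
  shows "(f' has_integral (f b - f a)) {a..b}"
  by (rule fundamental_theorem_of_calculus[OF assms(1)])
     (use assms(2) in \<open>auto simp: has_real_derivative_iff_has_vector_derivative[symmetric]
        intro: has_field_derivative_at_within\<close>)

lemma integral_swap_nonneg:
  fixes F :: "real \<Rightarrow> real \<Rightarrow> real"
  assumes "continuous_on ({a..b} \<times> {c..d}) (\<lambda>x. F (fst x) (snd x))"
    and "\<And>x. x \<in> {a..b} \<Longrightarrow> 0 \<le> integral {c..d} (F x)"
  shows "0 \<le> integral {c..d} (\<lambda>y. integral {a..b} (\<lambda>x. F x y))"
proof -
  have "continuous_on (cbox (a, c) (b, d)) (\<lambda>(x, y). F x y)"
    using assms(1) by (simp add: cbox_Pair_eq case_prod_unfold)
  from integral_swap_continuous[OF this]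
  have "integral {c..d} (\<lambda>y. integral {a..b} (\<lambda>x. F x y)) = integral {a..b} (\<lambda>x. integral {c..d} (F x))"
    by simp
  also have "\<dots> \<ge> 0"
  proof (cases "(\<lambda>x. integral {c..d} (F x)) integrable_on {a..b}")
    case True
    then show ?thesis by (rule integral_nonneg) (use assms(2) in auto)
  qed (simp add: not_integrable_integral)
  finally show ?thesis .
qed

text \<open>The partial derivatives are given explicitly; \<open>Gxy = \<partial>\<^sub>yGx\<close> and \<open>Gyx = \<partial>\<^sub>xGy\<close>.\<close>
definition C2_partials :: "complex set \<Rightarrow> (complex \<Rightarrow> real) \<Rightarrow> (complex \<Rightarrow> real) \<Rightarrow> (complex \<Rightarrow> real)
    \<Rightarrow> (complex \<Rightarrow> real) \<Rightarrow> (complex \<Rightarrow> real) \<Rightarrow> (complex \<Rightarrow> real) \<Rightarrow> (complex \<Rightarrow> real) \<Rightarrow> bool" where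
  "C2_partials S G Gx Gy Gxx Gxy Gyx Gyy \<longleftrightarrow>
    (\<forall>p\<in>S. (G has_derivative (\<lambda>w. Re w * Gx p + Im w * Gy p)) (at p) \<and>
           (Gx has_derivative (\<lambda>w. Re w * Gxx p + Im w * Gxy p)) (at p) \<and>
           (Gy has_derivative (\<lambda>w. Re w * Gyx p + Im w * Gyy p)) (at p)) \<and>
    continuous_on S Gxx \<and> continuous_on S Gxy \<and> continuous_on S Gyx \<and> continuous_on S Gyy"

lemma C2_partials_continuous:
  assumes "C2_partials S G Gx Gy Gxx Gxy Gyx Gyy" and "open S"
  shows "continuous_on S G" "continuous_on S Gx" "continuous_on S Gy"
  using assms unfolding C2_partials_def
  by (meson continuous_at_imp_continuous_on has_derivative_continuous)+

locale C2_subharmonic_disc =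
  fixes S :: "complex set" and G Gx Gy Gxx Gxy Gyx Gyy :: "complex \<Rightarrow> real"
  assumes C2: "C2_partials S G Gx Gy Gxx Gxy Gyx Gyy"
    and open_S: "open S"
    and unit_disc_subset: "cball 0 1 \<subseteq> S"
    and laplacian_nonneg: "\<And>p. p \<in> S \<Longrightarrow> 0 \<le> Gxx p + Gyy p"
begin

lemma rcis_in_S: "\<bar>t\<bar> \<le> 1 \<Longrightarrow> rcis t \<theta> \<in> S"
  using unit_disc_subset by auto

text \<open>For \<open>u(t,\<theta>) = G (rcis t \<theta>)\<close>: \<open>radial = \<partial>\<^sub>tu\<close>, \<open>radial2 = \<partial>\<^sub>t(t \<partial>\<^sub>tu)\<close>,
  \<open>angular = \<partial>\<^sub>\<theta>u\<close> and \<open>angular2 = \<partial>\<^sub>\<theta>\<^sup>2u\<close>.\<close>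

definition radial :: "real \<Rightarrow> real \<Rightarrow> real" where
  "radial t \<theta> = cos \<theta> * Gx (rcis t \<theta>) + sin \<theta> * Gy (rcis t \<theta>)"

definition radial2 :: "real \<Rightarrow> real \<Rightarrow> real" where
  "radial2 t \<theta> = radial t \<theta> +
     t * (cos \<theta> * (cos \<theta> * Gxx (rcis t \<theta>) + sin \<theta> * Gxy (rcis t \<theta>))
        + sin \<theta> * (cos \<theta> * Gyx (rcis t \<theta>) + sin \<theta> * Gyy (rcis t \<theta>)))"

definition angular :: "real \<Rightarrow> real \<Rightarrow> real" where
  "angular t \<theta> = - t * sin \<theta> * Gx (rcis t \<theta>) + t * cos \<theta> * Gy (rcis t \<theta>)"

definition angular2 :: "real \<Rightarrow> real \<Rightarrow> real" where
  "angular2 t \<theta> = - t * cos \<theta> * Gx (rcis t \<theta>) - t * sin \<theta> * Gy (rcis t \<theta>)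
     + (- t * sin \<theta>) * (- t * sin \<theta> * Gxx (rcis t \<theta>) + t * cos \<theta> * Gxy (rcis t \<theta>))
     + t * cos \<theta> * (- t * sin \<theta> * Gyx (rcis t \<theta>) + t * cos \<theta> * Gyy (rcis t \<theta>))"

lemma has_vector_derivative_rcis:
  "((\<lambda>t. rcis t \<theta>) has_vector_derivative Complex (cos \<theta>) (sin \<theta>)) (at t)"
  "((\<lambda>\<theta>. rcis t \<theta>) has_vector_derivative Complex (- t * sin \<theta>) (t * cos \<theta>)) (at \<theta>)"
  by (auto simp: has_vector_derivative_complex_iff intro!: derivative_eq_intros)

lemma
  assumes "\<bar>t\<bar> \<le> 1"
  shows has_real_derivative_radial: "((\<lambda>t. G (rcis t \<theta>)) has_real_derivative radial t \<theta>) (at t)"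
    and has_real_derivative_radial2: "((\<lambda>t. t * radial t \<theta>) has_real_derivative radial2 t \<theta>) (at t)"
    and has_real_derivative_angular: "((\<lambda>\<theta>. G (rcis t \<theta>)) has_real_derivative angular t \<theta>) (at \<theta>)"
    and has_real_derivative_angular2: "((\<lambda>\<theta>. angular t \<theta>) has_real_derivative angular2 t \<theta>) (at \<theta>)"
proof -
  note partials = C2[unfolded C2_partials_def] rcis_in_S[OF assms]
  note chain_t = has_real_derivative_compose_planar[OF _ has_vector_derivative_rcis(1)]
  note chain_\<theta> = has_real_derivative_compose_planar[OF _ has_vector_derivative_rcis(2)]
  show "((\<lambda>t. G (rcis t \<theta>)) has_real_derivative radial t \<theta>) (at t)"
    using chain_t[of G] partials by (simp add: radial_def)
  show "((\<lambda>t. t * radial t \<theta>) has_real_derivative radial2 t \<theta>) (at t)"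
  proof -
    have d: "((\<lambda>t. Gx (rcis t \<theta>)) has_real_derivative cos \<theta> * Gxx (rcis t \<theta>) + sin \<theta> * Gxy (rcis t \<theta>)) (at t)"
      "((\<lambda>t. Gy (rcis t \<theta>)) has_real_derivative cos \<theta> * Gyx (rcis t \<theta>) + sin \<theta> * Gyy (rcis t \<theta>)) (at t)"
      using chain_t[of Gx] chain_t[of Gy] partials by simp_all
    show ?thesis
      unfolding radial_def radial2_def
      by (rule derivative_eq_intros d refl)+ (simp add: algebra_simps)
  qed
  show "((\<lambda>\<theta>. G (rcis t \<theta>)) has_real_derivative angular t \<theta>) (at \<theta>)"
    using chain_\<theta>[of G] partials by (simp add: angular_def)
  show "((\<lambda>\<theta>. angular t \<theta>) has_real_derivative angular2 t \<theta>) (at \<theta>)"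
  proof -
    have d: "((\<lambda>\<theta>. Gx (rcis t \<theta>)) has_real_derivative - t * sin \<theta> * Gxx (rcis t \<theta>) + t * cos \<theta> * Gxy (rcis t \<theta>)) (at \<theta>)"
      "((\<lambda>\<theta>. Gy (rcis t \<theta>)) has_real_derivative - t * sin \<theta> * Gyx (rcis t \<theta>) + t * cos \<theta> * Gyy (rcis t \<theta>)) (at \<theta>)"
      using chain_\<theta>[of Gx] chain_\<theta>[of Gy] partials by simp_all
    show ?thesis
      unfolding angular_def angular2_def
      by (rule derivative_eq_intros d refl)+ (simp add: algebra_simps)
  qed
qed

lemma polar_laplacian:
  "t * radial2 t \<theta> + angular2 t \<theta> = t\<^sup>2 * (Gxx (rcis t \<theta>) + Gyy (rcis t \<theta>))"
proof -
  define X where "X = Gxx (rcis t \<theta>) + Gyy (rcis t \<theta>)"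
  have "t * radial2 t \<theta> + angular2 t \<theta> = t\<^sup>2 * (sin \<theta>)\<^sup>2 * X + t\<^sup>2 * (cos \<theta>)\<^sup>2 * X"
    unfolding radial2_def radial_def angular2_def X_def by (simp add: algebra_simps power2_eq_square)
  also have "\<dots> = t\<^sup>2 * X" by (simp add: sin_squared_eq algebra_simps)
  finally show ?thesis by (simp add: X_def)
qed

lemma continuous_on_polar:
  defines "R \<equiv> {0..1} \<times> {0..2*pi}"
  shows "continuous_on R (\<lambda>x. radial (fst x) (snd x))"
    and "continuous_on R (\<lambda>x. radial2 (fst x) (snd x))"
    and "continuous_on R (\<lambda>x. angular2 (fst x) (snd x))"
proof -
  have R: "(\<lambda>x. rcis (fst x) (snd x)) ` R \<subseteq> S"
    using rcis_in_S by (auto simp: R_def)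
  note compose = continuous_on_compose2[OF _ continuous_on_rcis[OF continuous_on_fst continuous_on_snd] R]
  note cont = C2_partials_continuous[OF C2 open_S] C2[unfolded C2_partials_def]
  show "continuous_on R (\<lambda>x. radial (fst x) (snd x))"
    unfolding radial_def using cont by (intro continuous_intros compose) auto
  show "continuous_on R (\<lambda>x. radial2 (fst x) (snd x))"
    unfolding radial2_def radial_def using cont by (intro continuous_intros compose) auto
  show "continuous_on R (\<lambda>x. angular2 (fst x) (snd x))"
    unfolding angular2_def using cont by (intro continuous_intros compose) auto
qed

lemma continuous_on_polar_slice:
  assumes "continuous_on ({0..1} \<times> {0..2*pi}) (\<lambda>x. F (fst x) (snd x))" and "t \<in> {0..1}"
  shows "continuous_on {0..2*pi} (F t)"
  by (rule continuous_on_compose2[OF assms(1), of _ "\<lambda>\<theta>. (t, \<theta>)", simplified])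
     (use assms(2) in \<open>auto intro!: continuous_intros\<close>)

lemma integral_angular2_eq_0:
  assumes "t \<in> {0..1}"
  shows "integral {0..2*pi} (angular2 t) = 0"
proof -
  have "(angular2 t has_integral (angular t (2*pi) - angular t 0)) {0..2*pi}"
    by (rule has_integral_real_derivative) (use has_real_derivative_angular2 assms in auto)
  moreover have "angular t (2*pi) = angular t 0"
    by (simp add: angular_def cis_rcis_eq[symmetric] rcis_def)
  ultimately show ?thesis by (simp add: integral_unique)
qed

lemma integral_radial_0_eq_0: "integral {0..2*pi} (radial 0) = 0"
proof -
  have "(radial 0 has_integral ((sin (2*pi) * Gx 0 - cos (2*pi) * Gy 0) - (sin 0 * Gx 0 - cos 0 * Gy 0))) {0..2*pi}"
    by (rule has_integral_real_derivative) (auto intro!: derivative_eq_intros simp: radial_def)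
  then show ?thesis by (simp add: integral_unique)
qed

lemma integral_radial2_nonneg:
  assumes t: "t \<in> {0..1}"
  shows "0 \<le> integral {0..2*pi} (radial2 t)"
proof (cases "t = 0")
  case True
  then show ?thesis using integral_radial_0_eq_0 by (simp add: radial2_def[abs_def])
next
  case False
  have int: "radial2 t integrable_on {0..2*pi}" "angular2 t integrable_on {0..2*pi}"
    using continuous_on_polar_slice[OF continuous_on_polar(2) t]
      continuous_on_polar_slice[OF continuous_on_polar(3) t] integrable_continuous_interval by blast+
  have "0 \<le> integral {0..2*pi} (\<lambda>\<theta>. t * radial2 t \<theta> + angular2 t \<theta>)"
    using int t rcis_in_S[of t] laplacian_nonneg
    by (intro integral_nonneg integrable_add integrable_on_mult_right) (auto simp: polar_laplacian)
  also have "\<dots> = t * integral {0..2*pi} (radial2 t)"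
    using int integral_angular2_eq_0[OF t] by (simp add: integral_add integrable_on_mult_right)
  finally show ?thesis using False t by (simp add: zero_le_mult_iff)
qed

lemma integral_radial_nonneg:
  assumes s: "s \<in> {0..1}"
  shows "0 \<le> integral {0..2*pi} (radial s)"
proof (cases "s = 0")
  case True
  then show ?thesis using integral_radial_0_eq_0 by simp
next
  case False
  have "integral {0..2*pi} (\<lambda>\<theta>. s * radial s \<theta>) = integral {0..2*pi} (\<lambda>\<theta>. integral {0..s} (\<lambda>t. radial2 t \<theta>))"
  proof (rule integral_cong)
    fix \<theta>
    have "((\<lambda>t. radial2 t \<theta>) has_integral (s * radial s \<theta> - 0 * radial 0 \<theta>)) {0..s}"
      by (rule has_integral_real_derivative) (use has_real_derivative_radial2 s in auto)
    then show "s * radial s \<theta> = integral {0..s} (\<lambda>t. radial2 t \<theta>)" by (simp add: integral_unique)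
  qed
  also have "\<dots> \<ge> 0"
    using s integral_radial2_nonneg
    by (intro integral_swap_nonneg continuous_on_subset[OF continuous_on_polar(2)]) auto
  finally show ?thesis using False s by (simp add: zero_le_mult_iff)
qed

theorem sub_mean_value: "2*pi * G 0 \<le> integral {0..2*pi} (\<lambda>\<theta>. G (cis \<theta>))"
proof -
  have "continuous_on {0..2*pi} (\<lambda>\<theta>. G (rcis 1 \<theta>))"
    using rcis_in_S[of 1]
    by (intro continuous_on_compose2[OF C2_partials_continuous(1)[OF C2 open_S]] continuous_intros) auto
  then have int: "(\<lambda>\<theta>. G (cis \<theta>)) integrable_on {0..2*pi}"
    by (simp add: cis_rcis_eq integrable_continuous_interval)
  have "integral {0..2*pi} (\<lambda>\<theta>. G (cis \<theta>) - G 0) = integral {0..2*pi} (\<lambda>\<theta>. integral {0..1} (\<lambda>s. radial s \<theta>))"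
  proof (rule integral_cong)
    fix \<theta>
    have "((\<lambda>s. radial s \<theta>) has_integral (G (rcis 1 \<theta>) - G (rcis 0 \<theta>))) {0..1}"
      by (rule has_integral_real_derivative) (use has_real_derivative_radial in auto)
    then show "G (cis \<theta>) - G 0 = integral {0..1} (\<lambda>s. radial s \<theta>)"
      by (simp add: integral_unique cis_rcis_eq)
  qed
  also have "\<dots> \<ge> 0"
    using integral_radial_nonneg continuous_on_polar(1) by (intro integral_swap_nonneg) auto
  finally have "0 \<le> integral {0..2*pi} (\<lambda>\<theta>. G (cis \<theta>) - G 0)" .
  also have "\<dots> = integral {0..2*pi} (\<lambda>\<theta>. G (cis \<theta>)) - 2*pi * G 0"
    using int by (subst integral_diff) (auto simp: mult.commute)
  finally show ?thesis by simp
qed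

end

section \<open>Second-order calculus in the plane\<close>

lemma C2_partials_mult:
  assumes N: "C2_partials S N Nx Ny Nxx Nxy Nyx Nyy" and E: "C2_partials S E Qx Qy Qxx Qxy Qyx Qyy" and S: "open S"
  shows "C2_partials S (\<lambda>p. N p * E p) (\<lambda>p. Nx p * E p + N p * Qx p) (\<lambda>p. Ny p * E p + N p * Qy p)
     (\<lambda>p. Nxx p * E p + Nx p * Qx p + Nx p * Qx p + N p * Qxx p)
     (\<lambda>p. Nxy p * E p + Nx p * Qy p + Ny p * Qx p + N p * Qxy p)
     (\<lambda>p. Nyx p * E p + Ny p * Qx p + Nx p * Qy p + N p * Qyx p)
     (\<lambda>p. Nyy p * E p + Ny p * Qy p + Ny p * Qy p + N p * Qyy p)"
proof -
  note cN = C2_partials_continuous[OF N S] and cE = C2_partials_continuous[OF E S]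
  note NN = N[unfolded C2_partials_def] and EE = E[unfolded C2_partials_def]
  show ?thesis unfolding C2_partials_def
  proof (intro conjI ballI)
    fix p assume p: "p \<in> S"
    show "((\<lambda>p. N p * E p) has_derivative (\<lambda>w. Re w * (Nx p * E p + N p * Qx p) + Im w * (Ny p * E p + N p * Qy p))) (at p)"
      using NN EE p by (auto intro!: derivative_eq_intros simp: algebra_simps)
    show "((\<lambda>p. Nx p * E p + N p * Qx p) has_derivative (\<lambda>w. Re w * (Nxx p * E p + Nx p * Qx p + Nx p * Qx p + N p * Qxx p) + Im w * (Nxy p * E p + Nx p * Qy p + Ny p * Qx p + N p * Qxy p))) (at p)"
      using NN EE p by (auto intro!: derivative_eq_intros simp: algebra_simps)
    show "((\<lambda>p. Ny p * E p + N p * Qy p) has_derivative (\<lambda>w. Re w * (Nyx p * E p + Ny p * Qx p + Nx p * Qy p + N p * Qyx p) + Im w * (Nyy p * E p + Ny p * Qy p + Ny p * Qy p + N p * Qyy p))) (at p)"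
      using NN EE p by (auto intro!: derivative_eq_intros simp: algebra_simps)
  qed (use NN EE cN cE in \<open>auto intro!: continuous_intros\<close>)
qed

lemma C2_partials_exp:
  assumes N: "C2_partials S s sx sy sxx sxy syx syy" and S: "open S"
  shows "C2_partials S (\<lambda>p. exp (s p)) (\<lambda>p. exp (s p) * sx p) (\<lambda>p. exp (s p) * sy p)
     (\<lambda>p. exp (s p) * (sx p * sx p + sxx p)) (\<lambda>p. exp (s p) * (sy p * sx p + sxy p))
     (\<lambda>p. exp (s p) * (sx p * sy p + syx p)) (\<lambda>p. exp (s p) * (sy p * sy p + syy p))"
proof -
  note cN = C2_partials_continuous[OF N S]
  note NN = N[unfolded C2_partials_def]
  show ?thesis unfolding C2_partials_def
  proof (intro conjI ballI)
    fix p assume p: "p \<in> S"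
    show "((\<lambda>p. exp (s p)) has_derivative (\<lambda>w. Re w * (exp (s p) * sx p) + Im w * (exp (s p) * sy p))) (at p)"
      using NN p by (auto intro!: derivative_eq_intros simp: algebra_simps)
    show "((\<lambda>p. exp (s p) * sx p) has_derivative (\<lambda>w. Re w * (exp (s p) * (sx p * sx p + sxx p)) + Im w * (exp (s p) * (sy p * sx p + sxy p)))) (at p)"
      using NN p by (auto intro!: derivative_eq_intros simp: algebra_simps)
    show "((\<lambda>p. exp (s p) * sy p) has_derivative (\<lambda>w. Re w * (exp (s p) * (sx p * sy p + syx p)) + Im w * (exp (s p) * (sy p * sy p + syy p)))) (at p)"
      using NN p by (auto intro!: derivative_eq_intros simp: algebra_simps)
  qed (use NN cN in \<open>auto intro!: continuous_intros\<close>)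
qed

lemma C2_partials_lincomb:
  assumes N: "C2_partials S N Nx Ny Nxx Nxy Nyx Nyy" and E: "C2_partials S E Qx Qy Qxx Qxy Qyx Qyy" and S: "open S"
  shows "C2_partials S (\<lambda>p. a * N p + b * E p) (\<lambda>p. a * Nx p + b * Qx p) (\<lambda>p. a * Ny p + b * Qy p)
     (\<lambda>p. a * Nxx p + b * Qxx p) (\<lambda>p. a * Nxy p + b * Qxy p) (\<lambda>p. a * Nyx p + b * Qyx p) (\<lambda>p. a * Nyy p + b * Qyy p)"
proof -
  note NN = N[unfolded C2_partials_def] and EE = E[unfolded C2_partials_def]
  show ?thesis unfolding C2_partials_def
  proof (intro conjI ballI)
    fix p assume p: "p \<in> S"
    show "((\<lambda>p. a * N p + b * E p) has_derivative (\<lambda>w. Re w * (a * Nx p + b * Qx p) + Im w * (a * Ny p + b * Qy p))) (at p)"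
      using NN EE p by (auto intro!: derivative_eq_intros simp: algebra_simps)
    show "((\<lambda>p. a * Nx p + b * Qx p) has_derivative (\<lambda>w. Re w * (a * Nxx p + b * Qxx p) + Im w * (a * Nxy p + b * Qxy p))) (at p)"
      using NN EE p by (auto intro!: derivative_eq_intros simp: algebra_simps)
    show "((\<lambda>p. a * Ny p + b * Qy p) has_derivative (\<lambda>w. Re w * (a * Nyx p + b * Qyx p) + Im w * (a * Nyy p + b * Qyy p))) (at p)"
      using NN EE p by (auto intro!: derivative_eq_intros simp: algebra_simps)
  qed (use NN EE in \<open>auto intro!: continuous_intros\<close>)
qed

lemma C2_partials_cmod_power2:
  "C2_partials S (\<lambda>p. (cmod p)\<^sup>2) (\<lambda>p. 2 * Re p) (\<lambda>p. 2 * Im p) (\<lambda>_. 2) (\<lambda>_. 0) (\<lambda>_. 0) (\<lambda>_. 2)"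
  unfolding C2_partials_def cmod_power2
  by (auto intro!: derivative_eq_intros continuous_intros simp: algebra_simps)

lemma C2_partials_holomorphic_cmod_power2:
  assumes f: "f holomorphic_on S" and S: "open S"
  defines "f1 \<equiv> deriv f" and "f2 \<equiv> deriv (deriv f)"
  shows "C2_partials S (\<lambda>p. (cmod (f p))\<^sup>2)
     (\<lambda>p. 2 * (Re (f p) * Re (f1 p) + Im (f p) * Im (f1 p)))
     (\<lambda>p. 2 * (Im (f p) * Re (f1 p) - Re (f p) * Im (f1 p)))
     (\<lambda>p. 2 * ((Re (f1 p))\<^sup>2 + Re (f p) * Re (f2 p) + (Im (f1 p))\<^sup>2 + Im (f p) * Im (f2 p)))
     (\<lambda>p. 2 * (Im (f p) * Re (f2 p) - Re (f p) * Im (f2 p)))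
     (\<lambda>p. 2 * (Im (f p) * Re (f2 p) - Re (f p) * Im (f2 p)))
     (\<lambda>p. 2 * ((Im (f1 p))\<^sup>2 - Re (f p) * Re (f2 p) + (Re (f1 p))\<^sup>2 - Im (f p) * Im (f2 p)))"
proof -
  have h1: "f1 holomorphic_on S" unfolding f1_def using f S by (rule holomorphic_deriv)
  have h2: "f2 holomorphic_on S" unfolding f2_def using h1[unfolded f1_def] S by (rule holomorphic_deriv)
  have d0: "(f has_field_derivative f1 p) (at p)" if "p \<in> S" for p
    unfolding f1_def using f S that by (rule holomorphic_derivI)
  have d1: "(f1 has_field_derivative f2 p) (at p)" if "p \<in> S" for p
    unfolding f2_def f1_def using h1[unfolded f1_def] S that by (rule holomorphic_derivI)
  have c0: "continuous_on S f" "continuous_on S f1" "continuous_on S f2"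
    using f h1 h2 holomorphic_on_imp_continuous_on by blast+
  have dRe: "((\<lambda>x. Re (g x)) has_derivative (\<lambda>w. Re w * Re d - Im w * Im d)) (at p)"
   and dIm: "((\<lambda>x. Im (g x)) has_derivative (\<lambda>w. Re w * Im d + Im w * Re d)) (at p)"
    if "(g has_field_derivative d) (at p)" for g d p
  proof -
    have "(g has_derivative (\<lambda>w. d * w)) (at p)" using that by (simp add: has_field_derivative_def)
    from has_derivative_Re[OF this] has_derivative_Im[OF this]
    show "((\<lambda>x. Re (g x)) has_derivative (\<lambda>w. Re w * Re d - Im w * Im d)) (at p)"
      "((\<lambda>x. Im (g x)) has_derivative (\<lambda>w. Re w * Im d + Im w * Re d)) (at p)"
      by (simp_all add: algebra_simps)
  qed
  show ?thesis unfolding C2_partials_def cmod_power2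
  proof (intro conjI ballI)
    fix p assume p: "p \<in> S"
    note R0 = dRe[OF d0[OF p]] and I0 = dIm[OF d0[OF p]] and R1 = dRe[OF d1[OF p]] and I1 = dIm[OF d1[OF p]]
    show "((\<lambda>p. (Re (f p))\<^sup>2 + (Im (f p))\<^sup>2) has_derivative (\<lambda>w. Re w * (2 * (Re (f p) * Re (f1 p) + Im (f p) * Im (f1 p))) + Im w * (2 * (Im (f p) * Re (f1 p) - Re (f p) * Im (f1 p))))) (at p)"
      by (rule derivative_eq_intros R0 I0 refl)+ (simp add: algebra_simps power2_eq_square)
    show "((\<lambda>p. 2 * (Re (f p) * Re (f1 p) + Im (f p) * Im (f1 p))) has_derivative (\<lambda>w. Re w * (2 * ((Re (f1 p))\<^sup>2 + Re (f p) * Re (f2 p) + (Im (f1 p))\<^sup>2 + Im (f p) * Im (f2 p))) + Im w * (2 * (Im (f p) * Re (f2 p) - Re (f p) * Im (f2 p))))) (at p)"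
      by (rule derivative_eq_intros R0 I0 R1 I1 refl)+ (simp add: algebra_simps power2_eq_square)
    show "((\<lambda>p. 2 * (Im (f p) * Re (f1 p) - Re (f p) * Im (f1 p))) has_derivative (\<lambda>w. Re w * (2 * (Im (f p) * Re (f2 p) - Re (f p) * Im (f2 p))) + Im w * (2 * ((Im (f1 p))\<^sup>2 - Re (f p) * Re (f2 p) + (Re (f1 p))\<^sup>2 - Im (f p) * Im (f2 p))))) (at p)"
      by (rule derivative_eq_intros R0 I0 R1 I1 refl)+ (simp add: algebra_simps power2_eq_square)
  qed (use c0 in \<open>auto intro!: continuous_intros\<close>)
qed

text \<open>The Laplacian of \<open>|f|\<^sup>2 e\<^sup>s\<close> for holomorphic \<open>f = A + iB\<close> (with \<open>f' = a1 + i b1\<close>,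
  \<open>f'' = a2 + i b2\<close>), as computed by \<open>C2_partials_mult\<close> and \<open>C2_partials_exp\<close>; it equals
  \<open>e\<^sup>s (|2f' + f (s\<^sub>x - i s\<^sub>y)|\<^sup>2 + |f|\<^sup>2 \<Delta>s)\<close>.\<close>

lemma laplacian_cmod_power2_exp_nonneg:
  fixes E N A B a1 b1 a2 b2 sx sy sxx syy :: real
  assumes "0 \<le> E" "0 \<le> sxx + syy" "N = A\<^sup>2 + B\<^sup>2"
  shows "0 \<le> (2 * (a1\<^sup>2 + A * a2 + b1\<^sup>2 + B * b2) * E + 2 * (A * a1 + B * b1) * (E * sx)
      + 2 * (A * a1 + B * b1) * (E * sx) + N * (E * (sx * sx + sxx)))
    + (2 * (b1\<^sup>2 - A * a2 + a1\<^sup>2 - B * b2) * E + 2 * (B * a1 - A * b1) * (E * sy)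
      + 2 * (B * a1 - A * b1) * (E * sy) + N * (E * (sy * sy + syy)))"
proof -
  have "(2 * (a1\<^sup>2 + A * a2 + b1\<^sup>2 + B * b2) * E + 2 * (A * a1 + B * b1) * (E * sx)
      + 2 * (A * a1 + B * b1) * (E * sx) + N * (E * (sx * sx + sxx)))
    + (2 * (b1\<^sup>2 - A * a2 + a1\<^sup>2 - B * b2) * E + 2 * (B * a1 - A * b1) * (E * sy)
      + 2 * (B * a1 - A * b1) * (E * sy) + N * (E * (sy * sy + syy)))
    = E * ((2 * a1 + A * sx + B * sy)\<^sup>2 + (2 * b1 + B * sx - A * sy)\<^sup>2 + N * (sxx + syy))"
    using assms(3) by (simp add: algebra_simps power2_eq_square)
  also have "\<dots> \<ge> 0"
  proof -
    have n0: "0 \<le> N * (sxx + syy)" using assms by (simp add: mult_nonneg_nonneg)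
    have "0 \<le> (2 * a1 + A * sx + B * sy)\<^sup>2 + (2 * b1 + B * sx - A * sy)\<^sup>2 + N * (sxx + syy)"
      using n0 by simp
    thus ?thesis using assms(1) by simp
  qed
  finally show ?thesis .
qed

lemma cscale_decomp: "cscale c v = Re c *\<^sub>R v + Im c *\<^sub>R cscale \<i> v"
  by (simp add: cscale_def vec_eq_iff complex_eq_iff algebra_simps)

lemma cscale_zero_left [simp]: "cscale 0 v = 0"
  by (simp add: cscale_def vec_eq_iff)

lemma cscale_add: "cscale a (v + w) = cscale a v + cscale a w"
  by (simp add: cscale_def vec_eq_iff algebra_simps)

lemma cscale_scaleR: "cscale a (c *\<^sub>R v) = c *\<^sub>R cscale a v"
  by (simp add: cscale_def vec_eq_iff scaleR_conv_of_real algebra_simps)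

lemma inner_cscale: "cscale l a \<bullet> cscale l b = (cmod l)\<^sup>2 * (a \<bullet> b)"
  unfolding cscale_def inner_vec_def inner_complex_def sum_distrib_left cmod_power2
  by (intro sum.cong refl) (simp add: algebra_simps power2_eq_square)

lemma norm_cscale: "norm (cscale l v) = cmod l * norm v"
proof -
  have "norm (cscale l v) = sqrt ((cmod l)\<^sup>2 * (v \<bullet> v))" by (simp add: norm_eq_sqrt_inner inner_cscale)
  also have "\<dots> = cmod l * norm v" by (simp add: real_sqrt_mult norm_eq_sqrt_inner)
  finally show ?thesis .
qed

lemma cscale_isometry:
  assumes "cmod u = 1"
  shows "linear (cscale u :: complex^'n::finite \<Rightarrow> _)" "\<And>x y. cscale u x \<bullet> cscale u y = x \<bullet> y"
  using assms by (auto simp: linear_iff cscale_add cscale_scaleR inner_cscale)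

lemma cscale_cis: "cscale (cis \<theta>) v = cos \<theta> *\<^sub>R v + sin \<theta> *\<^sub>R cscale \<i> v"
  by (subst cscale_decomp) simp

section \<open>Second derivatives of the weight\<close>

lemma d2_eq_second_derivative:
  fixes f :: "complex ^ 'n :: finite \<Rightarrow> real"
  assumes Df: "\<And>x. (f has_derivative blinfun_apply (Df x)) (at x)"
      and D2f: "\<And>x. (Df has_derivative blinfun_apply (D2f x)) (at x)"
  shows "d2 f x u v = blinfun_apply (blinfun_apply (D2f x) v) u"
proof -
  have inner: "deriv (\<lambda>t. f (x + t *\<^sub>R u + s *\<^sub>R v)) 0 = blinfun_apply (Df (x + s *\<^sub>R v)) u" for s
  proof (rule DERIV_imp_deriv)
    have "((\<lambda>t. x + t *\<^sub>R u + s *\<^sub>R v) has_derivative (\<lambda>h. h *\<^sub>R u)) (at 0)"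
      by (auto intro!: derivative_eq_intros)
    from diff_chain_at[OF this, of f "blinfun_apply (Df (x + s *\<^sub>R v))"] Df
    have "((\<lambda>t. f (x + t *\<^sub>R u + s *\<^sub>R v)) has_derivative (\<lambda>h. blinfun_apply (Df (x + s *\<^sub>R v)) (h *\<^sub>R u))) (at 0)"
      by (simp add: o_def)
    thus "((\<lambda>t. f (x + t *\<^sub>R u + s *\<^sub>R v)) has_real_derivative blinfun_apply (Df (x + s *\<^sub>R v)) u) (at 0)"
      unfolding has_field_derivative_def
      by (rule has_derivative_eq_rhs) (simp_all add: fun_eq_iff blinfun.scaleR_right)
  qed
  have "deriv (\<lambda>s. blinfun_apply (Df (x + s *\<^sub>R v)) u) 0 = blinfun_apply (blinfun_apply (D2f x) v) u"
  proof (rule DERIV_imp_deriv)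
    have "((\<lambda>s. x + s *\<^sub>R v) has_derivative (\<lambda>h. h *\<^sub>R v)) (at 0)"
      by (auto intro!: derivative_eq_intros)
    from diff_chain_at[OF this, of Df "blinfun_apply (D2f (x + 0 *\<^sub>R v))"] D2f
    have "((\<lambda>s. Df (x + s *\<^sub>R v)) has_derivative (\<lambda>h. blinfun_apply (D2f x) (h *\<^sub>R v))) (at 0)"
      by (simp add: o_def)
    from bounded_linear.has_derivative[OF blinfun.bounded_linear_left this, of u]
    show "((\<lambda>s. blinfun_apply (Df (x + s *\<^sub>R v)) u) has_real_derivative blinfun_apply (blinfun_apply (D2f x) v) u) (at 0)"
      unfolding has_field_derivative_def
      by (rule has_derivative_eq_rhs) (simp_all add: fun_eq_iff blinfun.scaleR_right blinfun.scaleR_left)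
  qed
  thus ?thesis unfolding d2_def inner .
qed

lemma C2_partials_complex_line:
  fixes f :: "complex ^ 'n :: finite \<Rightarrow> real" and z v :: "complex ^ 'n"
  assumes Df: "\<And>x. (f has_derivative blinfun_apply (Df x)) (at x)"
      and D2f: "\<And>x. (Df has_derivative blinfun_apply (D2f x)) (at x)"
      and cD2: "continuous_on UNIV D2f"
  defines "q \<equiv> (\<lambda>l. z + cscale l v)" and "iv \<equiv> cscale \<i> v"
  shows "C2_partials S (\<lambda>l. f (q l)) (\<lambda>l. blinfun_apply (Df (q l)) v) (\<lambda>l. blinfun_apply (Df (q l)) iv)
    (\<lambda>l. blinfun_apply (blinfun_apply (D2f (q l)) v) v) (\<lambda>l. blinfun_apply (blinfun_apply (D2f (q l)) iv) v)
    (\<lambda>l. blinfun_apply (blinfun_apply (D2f (q l)) v) iv) (\<lambda>l. blinfun_apply (blinfun_apply (D2f (q l)) iv) iv)"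
proof -
  have qe: "q = (\<lambda>l. z + (Re l *\<^sub>R v + Im l *\<^sub>R iv))"
    unfolding q_def iv_def by (subst cscale_decomp) simp
  have dq: "(q has_derivative (\<lambda>w. Re w *\<^sub>R v + Im w *\<^sub>R iv)) (at l)" for l
    unfolding qe by (auto intro!: derivative_eq_intros)
  have cq: "continuous_on UNIV q" unfolding qe by (intro continuous_intros)
  have dDf: "((\<lambda>l. Df (q l)) has_derivative (\<lambda>w. blinfun_apply (D2f (q l)) (Re w *\<^sub>R v + Im w *\<^sub>R iv))) (at l)" for l
    using diff_chain_at[OF dq D2f] by (simp add: o_def)
  show ?thesis unfolding C2_partials_def
  proof (intro conjI ballI)
    fix l assume "l \<in> S"
    have "((\<lambda>l. f (q l)) has_derivative (\<lambda>w. blinfun_apply (Df (q l)) (Re w *\<^sub>R v + Im w *\<^sub>R iv))) (at l)"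
      using diff_chain_at[OF dq Df] by (simp add: o_def)
    thus "((\<lambda>l. f (q l)) has_derivative (\<lambda>w. Re w * blinfun_apply (Df (q l)) v + Im w * blinfun_apply (Df (q l)) iv)) (at l)"
      by (simp add: blinfun.add_right blinfun.scaleR_right)
    have "((\<lambda>l. blinfun_apply (Df (q l)) v) has_derivative (\<lambda>w. blinfun_apply (blinfun_apply (D2f (q l)) (Re w *\<^sub>R v + Im w *\<^sub>R iv)) v)) (at l)"
      by (rule bounded_linear.has_derivative[OF blinfun.bounded_linear_left dDf])
    thus "((\<lambda>l. blinfun_apply (Df (q l)) v) has_derivative (\<lambda>w. Re w * blinfun_apply (blinfun_apply (D2f (q l)) v) v + Im w * blinfun_apply (blinfun_apply (D2f (q l)) iv) v)) (at l)"
      by (simp add: blinfun.add_right blinfun.scaleR_right blinfun.add_left blinfun.scaleR_left)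
    have "((\<lambda>l. blinfun_apply (Df (q l)) iv) has_derivative (\<lambda>w. blinfun_apply (blinfun_apply (D2f (q l)) (Re w *\<^sub>R v + Im w *\<^sub>R iv)) iv)) (at l)"
      by (rule bounded_linear.has_derivative[OF blinfun.bounded_linear_left dDf])
    thus "((\<lambda>l. blinfun_apply (Df (q l)) iv) has_derivative (\<lambda>w. Re w * blinfun_apply (blinfun_apply (D2f (q l)) v) iv + Im w * blinfun_apply (blinfun_apply (D2f (q l)) iv) iv)) (at l)"
      by (simp add: blinfun.add_right blinfun.scaleR_right blinfun.add_left blinfun.scaleR_left)
  qed (auto intro!: continuous_intros continuous_on_compose2[OF cD2 continuous_on_subset[OF cq]])
qed

lemma sum_Basis_complex_vec:
  "(\<Sum>b\<in>(Basis::(complex^'n::finite) set). F b) = (\<Sum>j\<in>UNIV. F (axis j 1) + F (axis j \<i>))"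
proof -
  have e: "(Basis::(complex^'n) set) = (\<lambda>(j,u). axis j u) ` (UNIV \<times> {1, \<i>})"
    by (auto simp: Basis_vec_def Basis_complex_def)
  have i: "inj_on (\<lambda>(j,u). axis j u) (UNIV \<times> {1::complex, \<i>})"
    by (auto simp: inj_on_def axis_eq_axis)
  have "(\<Sum>b\<in>(Basis::(complex^'n) set). F b) = (\<Sum>x\<in>UNIV \<times> {1, \<i>}. F ((\<lambda>(j,u). axis j u) x))"
    unfolding e by (rule sum.reindex[OF i, unfolded o_def])
  also have "\<dots> = (\<Sum>j\<in>UNIV. \<Sum>u\<in>{1,\<i>}. F (axis j u))"
    unfolding sum.cartesian_product by (simp add: case_prod_unfold)
  also have "\<dots> = (\<Sum>j\<in>UNIV. F (axis j 1) + F (axis j \<i>))"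
    by simp
  finally show ?thesis .
qed

lemma complex_vec_decomposition:
  fixes w :: "complex ^ 'n::finite"
  shows "w = (\<Sum>j\<in>UNIV. Re (w$j) *\<^sub>R axis j 1 + Im (w$j) *\<^sub>R axis j \<i>)"
proof (subst vec_eq_iff, intro allI)
  fix i
  have "(\<Sum>j\<in>UNIV. Re (w$j) *\<^sub>R axis j (1::complex) + Im (w$j) *\<^sub>R axis j \<i>) $ i
      = (\<Sum>j\<in>UNIV. (Re (w$j) *\<^sub>R axis j (1::complex) + Im (w$j) *\<^sub>R axis j \<i>) $ i)"
    by (rule sum_component)
  also have "\<dots> = (\<Sum>j\<in>UNIV. if j = i then Re (w$j) *\<^sub>R 1 + Im (w$j) *\<^sub>R \<i> else 0)"
    by (intro sum.cong) (auto simp: axis_def)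
  also have "\<dots> = w $ i" by (simp add: complex_eq_iff)
  finally show "w $ i = (\<Sum>j\<in>UNIV. Re (w$j) *\<^sub>R axis j 1 + Im (w$j) *\<^sub>R axis j \<i>) $ i" by simp
qed

lemma cscale_i_axis: "cscale \<i> (axis j 1) = axis j \<i>" "cscale \<i> (axis j \<i>) = - axis j 1"
  by (auto simp: cscale_def vec_eq_iff axis_def)

lemma blinfun_bilinear_expand:
  fixes M :: "(complex^'n::finite) \<Rightarrow>\<^sub>L (complex^'n) \<Rightarrow>\<^sub>L real"
  shows "blinfun_apply (blinfun_apply M (\<Sum>j\<in>UNIV. a j *\<^sub>R axis j 1 + b j *\<^sub>R axis j \<i>))
            (\<Sum>k\<in>UNIV. c k *\<^sub>R axis k 1 + d k *\<^sub>R axis k \<i>)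
   = (\<Sum>j\<in>UNIV. \<Sum>k\<in>UNIV. a j * c k * blinfun_apply (blinfun_apply M (axis j 1)) (axis k 1)
        + a j * d k * blinfun_apply (blinfun_apply M (axis j 1)) (axis k \<i>)
        + b j * c k * blinfun_apply (blinfun_apply M (axis j \<i>)) (axis k 1)
        + b j * d k * blinfun_apply (blinfun_apply M (axis j \<i>)) (axis k \<i>))"
proof -
  have "blinfun_apply (blinfun_apply M (\<Sum>j\<in>UNIV. a j *\<^sub>R axis j 1 + b j *\<^sub>R axis j \<i>))
            (\<Sum>k\<in>UNIV. c k *\<^sub>R axis k 1 + d k *\<^sub>R axis k \<i>)
     = (\<Sum>j\<in>UNIV. \<Sum>k\<in>UNIV. blinfun_apply (blinfun_apply M (a j *\<^sub>R axis j 1 + b j *\<^sub>R axis j \<i>))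
            (c k *\<^sub>R axis k 1 + d k *\<^sub>R axis k \<i>))"
    by (simp only: blinfun.sum_left blinfun.sum_right) (rule sum.swap)
  also have "\<dots> = (\<Sum>j\<in>UNIV. \<Sum>k\<in>UNIV. a j * c k * blinfun_apply (blinfun_apply M (axis j 1)) (axis k 1)
        + a j * d k * blinfun_apply (blinfun_apply M (axis j 1)) (axis k \<i>)
        + b j * c k * blinfun_apply (blinfun_apply M (axis j \<i>)) (axis k 1)
        + b j * d k * blinfun_apply (blinfun_apply M (axis j \<i>)) (axis k \<i>))"
    by (intro sum.cong refl)
       (simp add: blinfun.add_left blinfun.add_right blinfun.scaleR_left blinfun.scaleR_right algebra_simps)
  finally show ?thesis .
qed

lemma Re_complex_hessian_form:
  fixes f :: "complex ^ 'n :: finite \<Rightarrow> real" and M :: "(complex^'n) \<Rightarrow>\<^sub>L (complex^'n) \<Rightarrow>\<^sub>L real"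
  assumes d2: "\<And>u v. d2 f x u v = blinfun_apply (blinfun_apply M v) u"
  shows "Re (\<Sum>j\<in>UNIV. \<Sum>k\<in>UNIV. complex_hessian f x j k * w $ j * cnj (w $ k))
     = (blinfun_apply (blinfun_apply M w) w + blinfun_apply (blinfun_apply M (cscale \<i> w)) (cscale \<i> w)) / 4"
proof -
  define B where "B a b = blinfun_apply (blinfun_apply M a) b" for a b
  have iw: "cscale \<i> w = (\<Sum>j\<in>UNIV. (- Im (w$j)) *\<^sub>R axis j 1 + Re (w$j) *\<^sub>R axis j \<i>)"
    by (subst complex_vec_decomposition) (simp add: cscale_def vec_eq_iff complex_eq_iff)
  define X where "X j k = Re (w$j) * Re (w$k) * B (axis j 1) (axis k 1)
        + Re (w$j) * Im (w$k) * B (axis j 1) (axis k \<i>)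
        + Im (w$j) * Re (w$k) * B (axis j \<i>) (axis k 1)
        + Im (w$j) * Im (w$k) * B (axis j \<i>) (axis k \<i>)" for j k
  define Y where "Y j k = (- Im (w$j)) * (- Im (w$k)) * B (axis j 1) (axis k 1)
        + (- Im (w$j)) * Re (w$k) * B (axis j 1) (axis k \<i>)
        + Re (w$j) * (- Im (w$k)) * B (axis j \<i>) (axis k 1)
        + Re (w$j) * Re (w$k) * B (axis j \<i>) (axis k \<i>)" for j k
  have e1: "B w w = (\<Sum>j\<in>UNIV. \<Sum>k\<in>UNIV. X j k)"
    unfolding B_def X_def by (subst (1 2) complex_vec_decomposition) (rule blinfun_bilinear_expand)
  have e2: "B (cscale \<i> w) (cscale \<i> w) = (\<Sum>j\<in>UNIV. \<Sum>k\<in>UNIV. Y j k)"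
    unfolding B_def Y_def iw by (rule blinfun_bilinear_expand)
  have tm: "Re (complex_hessian f x j k * w $ j * cnj (w $ k)) = (X j k + Y j k) / 4" for j k
  proof -
    have H: "complex_hessian f x j k = (complex_of_real (B (axis j 1) (axis k 1) + B (axis j \<i>) (axis k \<i>))
        + \<i> * complex_of_real (B (axis j 1) (axis k \<i>) - B (axis j \<i>) (axis k 1))) / 4"
      by (simp add: complex_hessian_def Let_def d2 B_def)
    show ?thesis
      unfolding H X_def Y_def by (simp add: algebra_simps)
  qed
  have "Re (\<Sum>j\<in>UNIV. \<Sum>k\<in>UNIV. complex_hessian f x j k * w $ j * cnj (w $ k))
     = (\<Sum>j\<in>UNIV. \<Sum>k\<in>UNIV. (X j k + Y j k) / 4)"
    by (simp only: Re_sum tm)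
  also have "\<dots> = ((\<Sum>j\<in>UNIV. \<Sum>k\<in>UNIV. X j k) + (\<Sum>j\<in>UNIV. \<Sum>k\<in>UNIV. Y j k)) / 4"
    by (simp only: sum_divide_distrib[symmetric] sum.distrib add_divide_distrib)
  finally show ?thesis unfolding e1[symmetric] e2[symmetric] by (simp add: B_def)
qed

lemma bilinear_Cauchy_Schwarz:
  fixes S :: "'a::real_vector \<Rightarrow> 'a \<Rightarrow> real"
  assumes bl: "bilinear S" and sym: "\<And>x y. S x y = S y x" and pos: "\<And>x. 0 \<le> S x x"
  shows "(S x y)\<^sup>2 \<le> S x x * S y y"
proof -
  have l1: "linear (\<lambda>a. S a b)" and l2: "linear (\<lambda>b. S a b)" for a b
    using bl by (auto simp: bilinear_def)
  have exp: "S (x + t *\<^sub>R y) (x + t *\<^sub>R y) = S x x + 2 * t * S x y + t\<^sup>2 * S y y" for t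
  proof -
    have "S (x + t *\<^sub>R y) (x + t *\<^sub>R y) = S x (x + t *\<^sub>R y) + t * S y (x + t *\<^sub>R y)"
      using linear_add[OF l1] linear_scale[OF l1] by simp
    also have "\<dots> = S x x + t * S x y + t * (S y x + t * S y y)"
      using linear_add[OF l2] linear_scale[OF l2] by simp
    finally show ?thesis using sym[of y x] by (simp add: algebra_simps power2_eq_square)
  qed
  show ?thesis
  proof (cases "S y y = 0")
    case True
    have "S x y = 0"
    proof (rule ccontr)
      assume ne: "S x y \<noteq> 0"
      define t where "t = - (S x x + 1) / (2 * S x y)"
      have "0 \<le> S x x + 2 * t * S x y + t\<^sup>2 * S y y" using pos exp by metis
      also have "\<dots> = -1" using ne True by (simp add: t_def field_simps)
      finally show False by simp
    qed
    thus ?thesis using True by simp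
  next
    case False
    hence yy: "S y y > 0" using pos[of y] by simp
    define t where "t = - S x y / S y y"
    have "0 \<le> S x x + 2 * t * S x y + t\<^sup>2 * S y y" using pos exp by metis
    also have "\<dots> = S x x - (S x y)\<^sup>2 / S y y" using yy by (simp add: t_def field_simps power2_eq_square)
    finally show ?thesis using yy by (simp add: field_simps)
  qed
qed

lemma psd_bilinear_le_trace:
  fixes S :: "'a::euclidean_space \<Rightarrow> 'a \<Rightarrow> real"
  assumes bl: "bilinear S" and sym: "\<And>x y. S x y = S y x" and pos: "\<And>x. 0 \<le> S x x"
  shows "S v v \<le> (real DIM('a))\<^sup>2 * (norm v)\<^sup>2 * (\<Sum>b\<in>Basis. S b b)"
proof -
  define T where "T = (\<Sum>b\<in>Basis. S b b)"
  define m where "m = real DIM('a)"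
  have T0: "0 \<le> T" unfolding T_def by (intro sum_nonneg pos)
  have bT: "S b b \<le> T" if "b \<in> Basis" for b
    unfolding T_def by (rule member_le_sum[OF that]) (auto intro: pos)
  have l1: "linear (\<lambda>a. S a v)" using bl by (auto simp: bilinear_def)
  have "S v v = S (\<Sum>b\<in>Basis. (v \<bullet> b) *\<^sub>R b) v" by (simp add: euclidean_representation)
  also have "\<dots> = (\<Sum>b\<in>Basis. (v \<bullet> b) * S b v)"
    using linear_sum[OF l1, of "\<lambda>b. (v \<bullet> b) *\<^sub>R b" Basis] linear_scale[OF l1] by simp
  also have "\<dots> \<le> (\<Sum>b\<in>(Basis::'a set). norm v * (sqrt T * sqrt (S v v)))"
  proof (rule sum_mono)
    fix b :: 'a assume b: "b \<in> Basis"
    have "\<bar>S b v\<bar> \<le> sqrt (S b b * S v v)"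
      using bilinear_Cauchy_Schwarz[OF bl sym pos, of b v] by (simp add: real_le_rsqrt)
    also have "\<dots> \<le> sqrt (T * S v v)"
      using bT[OF b] pos[of v] by (intro real_sqrt_le_mono mult_right_mono) auto
    finally have 1: "\<bar>S b v\<bar> \<le> sqrt T * sqrt (S v v)" by (simp add: real_sqrt_mult)
    have 2: "\<bar>v \<bullet> b\<bar> \<le> norm v" using Basis_le_norm[OF b] by simp
    have "(v \<bullet> b) * S b v \<le> \<bar>v \<bullet> b\<bar> * \<bar>S b v\<bar>" by (simp add: abs_mult[symmetric])
    also have "\<dots> \<le> norm v * (sqrt T * sqrt (S v v))"
      using 1 2 by (intro mult_mono) auto
    finally show "(v \<bullet> b) * S b v \<le> norm v * (sqrt T * sqrt (S v v))" .
  qed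
  also have "\<dots> = m * norm v * sqrt T * sqrt (S v v)" by (simp add: m_def)
  finally have A: "S v v \<le> m * norm v * sqrt T * sqrt (S v v)" .
  have "sqrt (S v v) \<le> m * norm v * sqrt T"
  proof (cases "S v v = 0")
    case True thus ?thesis using T0 by (simp add: m_def)
  next
    case False
    hence p: "sqrt (S v v) > 0" using pos[of v] by simp
    have "sqrt (S v v) * sqrt (S v v) \<le> (m * norm v * sqrt T) * sqrt (S v v)"
      using A pos[of v] by (simp add: mult_ac)
    from mult_right_le_imp_le[OF this p] show ?thesis .
  qed
  hence "(sqrt (S v v))\<^sup>2 \<le> (m * norm v * sqrt T)\<^sup>2"
    by (intro power_mono) (auto intro: pos)
  thus ?thesis using pos[of v] T0 by (simp add: T_def m_def power_mult_distrib)
qed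

lemma levi_form_le_laplacian:
  fixes \<phi> :: "complex ^ 'n :: finite \<Rightarrow> real" and M :: "(complex^'n) \<Rightarrow>\<^sub>L (complex^'n) \<Rightarrow>\<^sub>L real"
  assumes psh: "plurisubharmonic \<phi>" and d2: "\<And>u v. d2 \<phi> x u v = blinfun_apply (blinfun_apply M v) u"
  shows "blinfun_apply (blinfun_apply M v) v + blinfun_apply (blinfun_apply M (cscale \<i> v)) (cscale \<i> v)
     \<le> 2 * (real DIM(complex^'n))\<^sup>2 * (norm v)\<^sup>2 * laplacian \<phi> x"
proof -
  define B where "B a b = blinfun_apply (blinfun_apply M a) b" for a b
  define J where "J a = cscale \<i> a" for a :: "complex^'n"
  define S where "S a b = B a b + B b a + B (J a) (J b) + B (J b) (J a)" for a b
  have Bl: "B (a + a') b = B a b + B a' b" "B a (b + b') = B a b + B a b'"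
     "B (c *\<^sub>R a) b = c * B a b" "B a (c *\<^sub>R b) = c * B a b" for a a' b b' c
    by (simp_all add: B_def blinfun.add_left blinfun.add_right blinfun.scaleR_left blinfun.scaleR_right)
  have Jl: "J (a + b) = J a + J b" "J (c *\<^sub>R a) = c *\<^sub>R J a" for a b c
    by (simp_all add: J_def cscale_add cscale_scaleR)
  have bl: "bilinear S"
    unfolding bilinear_def linear_iff S_def by (simp add: Bl Jl algebra_simps)
  have sym: "S a b = S b a" for a b unfolding S_def by simp
  have pos: "0 \<le> S a a" for a
  proof -
    have "0 \<le> Re (\<Sum>j\<in>UNIV. \<Sum>k\<in>UNIV. complex_hessian \<phi> x j k * a $ j * cnj (a $ k))"
      using psh unfolding plurisubharmonic_def Let_def by blast
    also have "\<dots> = (B a a + B (J a) (J a)) / 4"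
      unfolding Re_complex_hessian_form[of \<phi> x M, OF d2] B_def J_def ..
    finally show ?thesis unfolding S_def by simp
  qed
  have Jax: "J (axis j 1) = axis j \<i>" "J (axis j \<i>) = - axis j 1" for j
    by (simp_all add: J_def cscale_i_axis)
  have Bneg: "B (- a) (- a) = B a a" for a
    using Bl(3)[of "-1" a] Bl(4)[of a "-1"] by simp
  have trS: "(\<Sum>b\<in>Basis. S b b) = 4 * (\<Sum>b\<in>Basis. B b b)"
    unfolding sum_Basis_complex_vec S_def by (simp add: Jax Bneg sum_distrib_left algebra_simps sum.distrib)
  have lap: "laplacian \<phi> x = (\<Sum>b\<in>Basis. B b b)"
    unfolding laplacian_def d2 B_def ..
  have "S v v \<le> (real DIM(complex^'n))\<^sup>2 * (norm v)\<^sup>2 * (\<Sum>b\<in>Basis. S b b)"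
    by (rule psd_bilinear_le_trace[OF bl sym pos])
  hence "S v v \<le> (real DIM(complex^'n))\<^sup>2 * (norm v)\<^sup>2 * (4 * laplacian \<phi> x)"
    by (simp only: trS lap)
  moreover have "S v v = 2 * (B v v + B (J v) (J v))" by (simp add: S_def)
  ultimately have "B v v + B (J v) (J v) \<le> 2 * (real DIM(complex^'n))\<^sup>2 * (norm v)\<^sup>2 * laplacian \<phi> x"
    by (simp add: algebra_simps)
  thus ?thesis by (simp add: B_def J_def)
qed

lemma continuous_on_laplacian:
  fixes \<phi> :: "complex ^ 'n :: finite \<Rightarrow> real"
  assumes "C2 \<phi>"
  shows "continuous_on UNIV (laplacian \<phi>)"
proof -
  obtain Df D2f where Df: "\<And>x. (\<phi> has_derivative blinfun_apply (Df x)) (at x)"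
    and D2f: "\<And>x. (Df has_derivative blinfun_apply (D2f x)) (at x)" and cD: "continuous_on UNIV D2f"
    using assms unfolding C2_def by blast
  have "laplacian \<phi> = (\<lambda>x. \<Sum>b\<in>Basis. blinfun_apply (blinfun_apply (D2f x) b) b)"
    by (rule ext) (simp add: laplacian_def d2_eq_second_derivative[OF Df D2f])
  thus ?thesis by (auto intro!: continuous_intros cD)
qed

lemma bdd_above_image_ball:
  fixes f :: "'a::heine_borel \<Rightarrow> real"
  assumes "continuous_on UNIV f"
  shows "bdd_above (f ` ball z R)"
proof -
  have "compact (f ` cball z R)"
    by (rule compact_continuous_image[OF continuous_on_subset[OF assms]]) auto
  then have "bdd_above (f ` cball z R)" by (simp add: bounded_imp_bdd_above compact_imp_bounded)
  then show ?thesis by (rule bdd_above_mono) auto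
qed

lemma exists_radius_gt_below_rho:
  fixes \<phi> :: "complex ^ 'n :: finite \<Rightarrow> real"
  assumes "C2 \<phi>" and "a < rho \<phi> z"
  obtains r where "a < r" "0 < r" "(SUP w\<in>ball z r. laplacian \<phi> w) \<le> 1 / r\<^sup>2"
proof -
  define L where "L = laplacian \<phi>"
  define R where "R = {r. r > 0 \<and> (SUP w\<in>ball z r. L w) \<le> 1 / r\<^sup>2}"
  have "R \<noteq> {}"
  proof -
    obtain M where M: "\<And>w. w \<in> ball z 1 \<Longrightarrow> L w \<le> M"
      using bdd_above_image_ball[OF continuous_on_laplacian[OF assms(1)]]
      unfolding L_def bdd_above_def by blast
    define m where "m = max M 0"
    define r where "r = 1 / (m + 1)"
    have m: "0 \<le> m" and r: "0 < r" "r \<le> 1" unfolding r_def m_def by auto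
    have "(SUP w\<in>ball z r. L w) \<le> m"
      using r M by (intro cSUP_least) (auto simp: m_def le_max_iff_disj)
    also have "m \<le> (m + 1)\<^sup>2" using m by (simp add: power2_eq_square algebra_simps)
    then have "m \<le> 1 / r\<^sup>2" by (simp add: r_def power_divide)
    finally show ?thesis using r unfolding R_def by auto
  qed
  moreover have "a < Sup R" using assms(2) by (simp add: rho_def R_def L_def)
  ultimately obtain r where "r \<in> R" "a < r"
    by (metis bdd_above_def less_cSup_iff not_le)
  then show ?thesis using that by (auto simp: R_def L_def)
qed

lemma laplacian_le_inverse_square:
  fixes \<phi> :: "complex ^ 'n :: finite \<Rightarrow> real"
  assumes C: "C2 \<phi>" and r: "0 < r" "r \<le> rho \<phi> z" and p: "p \<in> ball z r"
  shows "laplacian \<phi> p \<le> 1 / r\<^sup>2"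
proof (rule ccontr)
  assume "\<not> laplacian \<phi> p \<le> 1 / r\<^sup>2"
  then have Lp: "1 / r\<^sup>2 < laplacian \<phi> p" by simp
  then have Lpos: "0 < laplacian \<phi> p" by (smt (verit) divide_pos_pos r(1) zero_less_power)
  have "1 / r < sqrt (laplacian \<phi> p)"
    using real_sqrt_less_mono[OF Lp] r(1) by (simp add: real_sqrt_divide)
  then have "1 / sqrt (laplacian \<phi> p) < r"
    using r(1) Lpos by (simp add: field_simps)
  then have "max (dist z p) (1 / sqrt (laplacian \<phi> p)) < rho \<phi> z"
    using p r(2) by auto
  then obtain r' where r': "max (dist z p) (1 / sqrt (laplacian \<phi> p)) < r'" "0 < r'"
    and sup: "(SUP w\<in>ball z r'. laplacian \<phi> w) \<le> 1 / r'\<^sup>2"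
    using exists_radius_gt_below_rho[OF C] by blast
  have "laplacian \<phi> p \<le> (SUP w\<in>ball z r'. laplacian \<phi> w)"
    using r'(1) by (intro cSUP_upper bdd_above_image_ball continuous_on_laplacian C) auto
  with sup have "laplacian \<phi> p \<le> 1 / r'\<^sup>2" by simp
  moreover have "1 < r' * sqrt (laplacian \<phi> p)"
    using r'(1) Lpos by (simp add: field_simps)
  then have "1 < (r' * sqrt (laplacian \<phi> p))\<^sup>2" by (simp add: one_less_power)
  then have "1 / r'\<^sup>2 < laplacian \<phi> p"
    using r'(2) Lpos by (simp add: power_mult_distrib field_simps)
  ultimately show False by simp
qed

section \<open>Rotation invariance of Lebesgue measure\<close>

lemma basis_bijection_isometry:
  fixes \<beta> :: "'a::euclidean_space \<Rightarrow> 'b::euclidean_space"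
  assumes bij: "bij_betw \<beta> Basis Basis"
  assumes \<iota>_def: "\<And>x. \<iota> x = (\<Sum>b\<in>Basis. (x \<bullet> b) *\<^sub>R \<beta> b)"
  shows "\<And>x b. b \<in> Basis \<Longrightarrow> \<iota> x \<bullet> \<beta> b = x \<bullet> b"
    and "linear \<iota>"
    and "\<And>x y. \<iota> x \<bullet> \<iota> y = x \<bullet> y"
proof -
  have inj: "inj_on \<beta> Basis" and im: "\<beta> ` Basis = Basis" using bij by (auto simp: bij_betw_def)
  have bb: "\<beta> b' \<bullet> \<beta> b = (if b' = b then 1 else 0)" if "b \<in> Basis" "b' \<in> Basis" for b b'
  proof -
    have "\<beta> b \<in> Basis" "\<beta> b' \<in> Basis" using that im by auto
    thus ?thesis using inj that by (simp add: inner_Basis inj_on_eq_iff)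
  qed
  show co: "\<iota> x \<bullet> \<beta> b = x \<bullet> b" if "b \<in> Basis" for x b
    unfolding \<iota>_def[of x] inner_sum_left using that by (simp add: bb if_distrib cong: if_cong)
  show lin: "linear \<iota>" unfolding \<iota>_def[abs_def]
    by (simp add: linear_iff inner_add_left scaleR_add_left sum.distrib inner_scaleR_left scaleR_sum_right)
  have \<iota>x: "\<iota> x = (\<Sum>b\<in>Basis. (x \<bullet> b) *\<^sub>R \<beta> b)" for x by (rule \<iota>_def)
  show "\<iota> x \<bullet> \<iota> y = x \<bullet> y" for x y
  proof -
    have "\<iota> x \<bullet> \<iota> y = (\<Sum>b\<in>Basis. (x \<bullet> b) * (\<iota> y \<bullet> \<beta> b))"
      by (subst (1) \<iota>x) (simp add: inner_sum_left inner_commute[of "\<iota> y"])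
    also have "\<dots> = (\<Sum>b\<in>Basis. (x \<bullet> b) * (y \<bullet> b))" by (intro sum.cong refl) (simp add: co)
    also have "\<dots> = x \<bullet> y" by (rule euclidean_inner[symmetric])
    finally show ?thesis .
  qed
qed

lemma distr_lborel_basis_bijection:
  fixes \<beta> :: "'a::euclidean_space \<Rightarrow> 'b::euclidean_space"
  assumes bij: "bij_betw \<beta> Basis Basis"
  assumes \<iota>_def: "\<And>x. \<iota> x = (\<Sum>b\<in>Basis. (x \<bullet> b) *\<^sub>R \<beta> b)"
  shows "distr lborel borel \<iota> = lborel"
proof -
  note co = basis_bijection_isometry(1)[OF bij \<iota>_def] and lin = basis_bijection_isometry(2)[OF bij \<iota>_def]
  have im: "\<beta> ` Basis = Basis" using bij by (auto simp: bij_betw_def)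
  define \<kappa> where "\<kappa> y = (\<Sum>b\<in>Basis. (y \<bullet> \<beta> b) *\<^sub>R b)" for y :: 'b
  have \<kappa>b: "\<kappa> y \<bullet> b = y \<bullet> \<beta> b" if "b \<in> Basis" for y b
    unfolding \<kappa>_def inner_sum_left using that by (simp add: inner_Basis if_distrib cong: if_cong)
  have meas: "\<iota> \<in> borel_measurable lborel"
    unfolding measurable_lborel2 by (intro borel_measurable_continuous_onI linear_continuous_on linear_conv_bounded_linear[THEN iffD1, OF lin])
  have pre: "\<iota> -` box l u = box (\<kappa> l) (\<kappa> u)" for l u
  proof -
    have "x \<in> \<iota> -` box l u \<longleftrightarrow> (\<forall>b\<in>Basis. l \<bullet> \<beta> b < x \<bullet> b \<and> x \<bullet> b < u \<bullet> \<beta> b)" for x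
    proof -
      have "x \<in> \<iota> -` box l u \<longleftrightarrow> (\<forall>b'\<in>Basis. l \<bullet> b' < \<iota> x \<bullet> b' \<and> \<iota> x \<bullet> b' < u \<bullet> b')"
        by (simp add: mem_box)
      also have "\<dots> \<longleftrightarrow> (\<forall>b\<in>Basis. l \<bullet> \<beta> b < \<iota> x \<bullet> \<beta> b \<and> \<iota> x \<bullet> \<beta> b < u \<bullet> \<beta> b)"
        using ball_simps(9)[of \<beta> Basis "\<lambda>b'. l \<bullet> b' < \<iota> x \<bullet> b' \<and> \<iota> x \<bullet> b' < u \<bullet> b'"] im by simp
      finally show ?thesis by (simp add: co)
    qed
    thus ?thesis by (auto simp: mem_box \<kappa>b)
  qed
  show "distr lborel borel \<iota> = lborel"
  proof (rule lborel_eqI[symmetric])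
    fix l u :: 'b assume le: "\<And>b. b \<in> Basis \<Longrightarrow> l \<bullet> b \<le> u \<bullet> b"
    have "emeasure (distr lborel borel \<iota>) (box l u) = emeasure lborel (\<iota> -` box l u)"
      by (subst emeasure_distr[OF meas]) auto
    also have "\<dots> = emeasure lborel (box (\<kappa> l) (\<kappa> u))" by (simp add: pre)
    also have "\<dots> = (\<Prod>b\<in>Basis. (\<kappa> u - \<kappa> l) \<bullet> b)"
      using le im by (subst emeasure_lborel_box_eq) (auto simp: \<kappa>b inner_diff_left)
    also have "\<dots> = (\<Prod>b\<in>Basis. (u - l) \<bullet> \<beta> b)"
      by (intro arg_cong[where f=ennreal] prod.cong refl) (simp add: inner_diff_left \<kappa>b)
    also have "\<dots> = (\<Prod>b'\<in>Basis. (u - l) \<bullet> b')"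
      using prod.reindex_bij_betw[OF bij, of "\<lambda>b'. (u - l) \<bullet> b'"] by simp
    finally show "emeasure (distr lborel borel \<iota>) (box l u) = (\<Prod>b\<in>Basis. (u - l) \<bullet> b)" .
  qed simp
qed

lemma distr_lborel_orthogonal_transformation:
  fixes T :: "real^'m::{finite,wellorder} \<Rightarrow> real^'m::{finite,wellorder}"
  assumes T: "orthogonal_transformation T"
  shows "distr lborel borel T = lborel"
proof (rule lborel_eqI[symmetric])
  have lin: "linear T" using T by (rule orthogonal_transformation_linear)
  have cT: "continuous_on UNIV T"
    by (intro linear_continuous_on linear_conv_bounded_linear[THEN iffD1, OF lin])
  have meas: "T \<in> borel_measurable lborel"
    unfolding measurable_lborel2 by (intro borel_measurable_continuous_onI cT)
  have bij: "bij T" using T by (rule orthogonal_transformation_bij)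
  have Ti: "orthogonal_transformation (inv T)" using T by (rule orthogonal_transformation_inv)
  fix l u :: "real^'m::{finite,wellorder}" assume le: "\<And>b. b \<in> Basis \<Longrightarrow> l \<bullet> b \<le> u \<bullet> b"
  define A where "A = T -` box l u"
  have AI: "A = inv T ` box l u"
    unfolding A_def using bij by (simp add: bij_vimage_eq_inv_image)
  have Ab: "A \<in> sets borel" unfolding A_def
    by (intro borel_open open_vimage[OF open_box cT])
  have Abd: "bounded A" unfolding AI
    by (intro bounded_linear_image bounded_box linear_conv_bounded_linear[THEN iffD1]
        orthogonal_transformation_linear Ti)
  have "emeasure (distr lborel borel T) (box l u) = emeasure lborel A"
    unfolding A_def by (subst emeasure_distr[OF meas]) auto
  also have "\<dots> = ennreal (measure lborel A)"
    using emeasure_bounded_finite[OF Abd] by (simp add: emeasure_eq_ennreal_measure)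
  also have "measure lborel A = measure lebesgue A" using Ab by simp
  also have "\<dots> = measure lebesgue (box l u)"
    unfolding AI by (rule measure_orthogonal_image[OF Ti lmeasurable_box])
  also have "\<dots> = measure lborel (box l u)" by simp
  also have "ennreal \<dots> = emeasure lborel (box l u)"
    using emeasure_lborel_box_finite[of l u] by (simp add: emeasure_eq_ennreal_measure)
  also have "\<dots> = (\<Prod>b\<in>Basis. (u - l) \<bullet> b)"
    using le by (simp add: emeasure_lborel_box_eq)
  finally show "emeasure (distr lborel borel T) (box l u) = (\<Prod>b\<in>Basis. (u - l) \<bullet> b)" .
qed simp

lemma nn_integral_lborel_translate:
  fixes H :: "complex^'n::finite \<Rightarrow> ennreal"
  assumes "H \<in> borel_measurable borel"
  shows "(\<integral>\<^sup>+w. H w \<partial>lborel) = (\<integral>\<^sup>+y. H (z + y) \<partial>lborel)"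
proof -
  have m: "((+) z) \<in> measurable lborel borel" by (simp add: measurable_lborel2)
  have "(\<integral>\<^sup>+w. H w \<partial>lborel) = (\<integral>\<^sup>+w. H w \<partial>(distr lborel borel ((+) z)))"
    by (simp add: lborel_distr_plus)
  also have "\<dots> = (\<integral>\<^sup>+y. H (z + y) \<partial>lborel)"
    by (rule nn_integral_distr[OF m]) (simp add: measurable_distr_eq1 assms)
  finally show ?thesis .
qed

lemma euclidean_isometry_to_real_vec:
  assumes "DIM('a::euclidean_space) = CARD('m::{finite,wellorder})"
  obtains \<iota> :: "'a::euclidean_space \<Rightarrow> real^'m::{finite,wellorder}"
    and \<kappa> :: "real^'m::{finite,wellorder} \<Rightarrow> 'a::euclidean_space"
  where "linear \<iota>" "\<And>x y. \<iota> x \<bullet> \<iota> y = x \<bullet> y"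
    "linear \<kappa>" "\<And>x y. \<kappa> x \<bullet> \<kappa> y = x \<bullet> y"
    "\<And>x. \<kappa> (\<iota> x) = x" "distr lborel borel \<kappa> = lborel"
proof -
  have "card (Basis::'a set) = card (Basis::((real, 'm) vec) set)"
    using assms by simp
  then obtain \<beta> where \<beta>: "bij_betw \<beta> (Basis::'a set) (Basis::((real, 'm) vec) set)"
    using finite_same_card_bij[OF finite_Basis finite_Basis] by blast
  define \<beta>' where "\<beta>' = inv_into Basis \<beta>"
  have \<beta>': "bij_betw \<beta>' (Basis::((real, 'm) vec) set) (Basis::'a set)"
    unfolding \<beta>'_def by (rule bij_betw_inv_into[OF \<beta>])
  define \<iota> where "\<iota> x = (\<Sum>b\<in>Basis. (x \<bullet> b) *\<^sub>R \<beta> b)" for x :: 'a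
  define \<kappa> where "\<kappa> y = (\<Sum>b\<in>Basis. (y \<bullet> b) *\<^sub>R \<beta>' b)" for y :: "(real, 'm) vec"
  note I = basis_bijection_isometry[OF \<beta> \<iota>_def]
  note K = basis_bijection_isometry[OF \<beta>' \<kappa>_def] distr_lborel_basis_bijection[OF \<beta>' \<kappa>_def]
  have "\<kappa> (\<iota> x) = x" for x
  proof (rule euclidean_eqI)
    fix b :: 'a assume b: "b \<in> Basis"
    then have "\<beta> b \<in> Basis" "\<beta>' (\<beta> b) = b"
      using \<beta> by (auto simp: \<beta>'_def bij_betw_def bij_betw_inv_into_left)
    then show "\<kappa> (\<iota> x) \<bullet> b = x \<bullet> b"
      using K(1) I(1)[OF b] by metis
  qed
  then show ?thesis using that I(2,3) K(2-4) by blast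
qed

lemma nn_integral_isometry_invariant:
  fixes R :: "'a::euclidean_space \<Rightarrow> 'a" and F :: "'a \<Rightarrow> ennreal"
  assumes dim: "DIM('a) = CARD('m::{finite,wellorder})"
    and R: "linear R" "\<And>x y. R x \<bullet> R y = x \<bullet> y" and F: "F \<in> borel_measurable borel"
  shows "(\<integral>\<^sup>+x. F (R x) \<partial>lborel) = (\<integral>\<^sup>+x. F x \<partial>lborel)"
proof -
  obtain \<iota> :: "'a \<Rightarrow> (real, 'm) vec" and \<kappa> where
    \<iota>: "linear \<iota>" "\<And>x y. \<iota> x \<bullet> \<iota> y = x \<bullet> y"
    and \<kappa>: "linear \<kappa>" "\<And>x y. \<kappa> x \<bullet> \<kappa> y = x \<bullet> y" "\<And>x. \<kappa> (\<iota> x) = x"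
    and distr_\<kappa>: "distr lborel borel \<kappa> = lborel"
    using euclidean_isometry_to_real_vec[OF dim] by metis
  define T where "T y = \<iota> (R (\<kappa> y))" for y
  have T: "orthogonal_transformation T"
    unfolding orthogonal_transformation_def T_def
    using linear_compose[OF linear_compose[OF \<kappa>(1) R(1)] \<iota>(1)]
    by (simp add: o_def \<iota>(2) R(2) \<kappa>(2))
  have measurable_linear: "f \<in> borel_measurable lborel" if "linear f" for f :: "'b::euclidean_space \<Rightarrow> 'c::euclidean_space"
    unfolding measurable_lborel2
    by (intro borel_measurable_continuous_onI linear_continuous_on linear_conv_bounded_linear[THEN iffD1, OF that])
  have mR: "(\<lambda>x. F (R x)) \<in> borel_measurable borel"
    using F measurable_linear[OF R(1)] unfolding measurable_lborel2 by measurable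
  have mK: "(\<lambda>x. F (\<kappa> x)) \<in> borel_measurable borel"
    using F measurable_linear[OF \<kappa>(1)] unfolding measurable_lborel2 by measurable
  have "(\<integral>\<^sup>+x. F (R x) \<partial>lborel) = (\<integral>\<^sup>+x. F (R x) \<partial>distr lborel borel \<kappa>)"
    by (simp add: distr_\<kappa>)
  also have "\<dots> = (\<integral>\<^sup>+y. F (R (\<kappa> y)) \<partial>lborel)"
    by (rule nn_integral_distr[OF measurable_linear[OF \<kappa>(1)]]) (simp add: measurable_distr_eq1 mR)
  also have "\<dots> = (\<integral>\<^sup>+y. F (\<kappa> (T y)) \<partial>lborel)" by (simp add: T_def \<kappa>(3))
  also have "\<dots> = (\<integral>\<^sup>+y. F (\<kappa> y) \<partial>distr lborel borel T)"
    by (rule nn_integral_distr[OF measurable_linear[OF orthogonal_transformation_linear[OF T]], symmetric])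
       (simp add: measurable_distr_eq1 mK)
  also have "\<dots> = (\<integral>\<^sup>+y. F (\<kappa> y) \<partial>lborel)"
    by (simp add: distr_lborel_orthogonal_transformation[OF T])
  also have "\<dots> = (\<integral>\<^sup>+x. F x \<partial>distr lborel borel \<kappa>)"
    by (rule nn_integral_distr[OF measurable_linear[OF \<kappa>(1)], symmetric]) (simp add: measurable_distr_eq1 F)
  also have "\<dots> = (\<integral>\<^sup>+x. F x \<partial>lborel)" by (simp add: distr_\<kappa>)
  finally show ?thesis .
qed

lemma nn_integral_rotation_about:
  fixes F :: "complex^'n::finite \<Rightarrow> ennreal"
  assumes F: "F \<in> borel_measurable borel" and u: "cmod u = 1"
  shows "(\<integral>\<^sup>+w. F (z + cscale u (w - z)) \<partial>lborel) = (\<integral>\<^sup>+w. F w \<partial>lborel)"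
proof -
  have dim: "DIM(complex^'n) = CARD('n bit0)" by (simp add: card_bit0)
  have lin: "linear (cscale u :: complex^'n \<Rightarrow> _)" using cscale_isometry[OF u] by blast
  have m: "(\<lambda>w. F (z + cscale u (w - z))) \<in> borel_measurable borel"
    using F borel_measurable_continuous_onI[OF linear_continuous_on[OF linear_conv_bounded_linear[THEN iffD1, OF lin]]]
    by measurable
  have "(\<integral>\<^sup>+w. F (z + cscale u (w - z)) \<partial>lborel) = (\<integral>\<^sup>+y. F (z + cscale u y) \<partial>lborel)"
    using nn_integral_lborel_translate[OF m, of z] by simp
  also have "\<dots> = (\<integral>\<^sup>+y. F (z + y) \<partial>lborel)"
    by (rule nn_integral_isometry_invariant[OF dim lin cscale_isometry(2)[OF u]]) (use F in measurable)
  also have "\<dots> = (\<integral>\<^sup>+w. F w \<partial>lborel)" by (rule nn_integral_lborel_translate[OF F, symmetric])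
  finally show ?thesis .
qed

lemma continuous_on_rotation_about:
  "continuous_on UNIV (\<lambda>x::(complex^'n::finite) \<times> real. z + cscale (cis (snd x)) (fst x - z))"
proof -
  have "linear (cscale \<i> :: complex^'n \<Rightarrow> _)" using cscale_isometry[of \<i>] by simp
  then show ?thesis
    unfolding cscale_cis by (intro continuous_intros linear_continuous_on_compose[of _ _ "cscale \<i>"])
qed

lemma continuous_on_rotation_about_slices:
  fixes z w :: "complex^'n::finite"
  shows "continuous_on A (\<lambda>w. z + cscale (cis \<theta>) (w - z))"
    and "continuous_on B (\<lambda>\<theta>. z + cscale (cis \<theta>) (w - z))"
proof -
  let ?R = "\<lambda>x::(complex^'n) \<times> real. z + cscale (cis (snd x)) (fst x - z)"
  have "continuous_on A (\<lambda>w. ?R (w, \<theta>))" "continuous_on B (\<lambda>\<theta>. ?R (w, \<theta>))"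
    by (rule continuous_on_compose2[OF continuous_on_rotation_about]; auto intro!: continuous_intros)+
  then show "continuous_on A (\<lambda>w. z + cscale (cis \<theta>) (w - z))"
    and "continuous_on B (\<lambda>\<theta>. z + cscale (cis \<theta>) (w - z))" by simp_all
qed

lemma borel_measurable_rotation_integrand:
  fixes F :: "complex^'n::finite \<Rightarrow> ennreal"
  assumes F: "F \<in> borel_measurable borel"
  shows "(\<lambda>(w, \<theta>). F (z + cscale (cis \<theta>) (w - z)) * indicator {0..2*pi} \<theta>) \<in> borel_measurable (lborel \<Otimes>\<^sub>M lborel)"
proof -
  have "(\<lambda>x. F (z + cscale (cis (snd x)) (fst x - z))) \<in> borel_measurable borel"
    by (rule measurable_compose[OF borel_measurable_continuous_onI[OF continuous_on_rotation_about] F])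
  moreover have "(snd :: (complex^'n) \<times> real \<Rightarrow> real) \<in> borel_measurable borel"
    by (intro borel_measurable_continuous_onI continuous_on_snd continuous_on_id)
  then have "(\<lambda>x::(complex^'n) \<times> real. indicator {0..2*pi} (snd x) :: ennreal) \<in> borel_measurable borel"
    by (rule measurable_compose) simp
  ultimately have "(\<lambda>x. F (z + cscale (cis (snd x)) (fst x - z)) * indicator {0..2*pi} (snd x)) \<in> borel_measurable borel"
    by measurable
  then show ?thesis
    unfolding lborel_prod measurable_lborel2 by (simp add: case_prod_unfold)
qed

lemma nn_integral_circle_rotations:
  fixes F :: "complex^'n::finite \<Rightarrow> ennreal"
  assumes F: "F \<in> borel_measurable borel"
  shows "(\<integral>\<^sup>+w. (\<integral>\<^sup>+\<theta>. F (z + cscale (cis \<theta>) (w - z)) * indicator {0..2*pi} \<theta> \<partial>lborel) \<partial>lborel)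
    = ennreal (2*pi) * (\<integral>\<^sup>+w. F w \<partial>lborel)"
proof -
  define R where "R \<theta> w = z + cscale (cis \<theta>) (w - z)" for \<theta> w
  note m = borel_measurable_rotation_integrand[OF F, of z, folded R_def]
  have inner: "(\<integral>\<^sup>+w. F (R \<theta> w) * indicator {0..2*pi} \<theta> \<partial>lborel)
      = (\<integral>\<^sup>+w. F w \<partial>lborel) * indicator {0..2*pi} \<theta>" for \<theta>
  proof -
    have "(\<lambda>w. F (R \<theta> w)) \<in> borel_measurable lborel"
      unfolding measurable_lborel2 R_def
      by (rule measurable_compose[OF borel_measurable_continuous_onI[OF continuous_on_rotation_about_slices(1)] F])
    then show ?thesis
      using nn_integral_rotation_about[OF F, of "cis \<theta>" z] by (simp add: nn_integral_multc R_def)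
  qed
  have "(\<integral>\<^sup>+w. (\<integral>\<^sup>+\<theta>. F (R \<theta> w) * indicator {0..2*pi} \<theta> \<partial>lborel) \<partial>lborel)
      = (\<integral>\<^sup>+\<theta>. (\<integral>\<^sup>+w. F (R \<theta> w) * indicator {0..2*pi} \<theta> \<partial>lborel) \<partial>lborel)"
    by (rule lborel_pair.Fubini'[OF m, symmetric])
  also have "\<dots> = (\<integral>\<^sup>+\<theta>. (\<integral>\<^sup>+w. F w \<partial>lborel) * indicator {0..2*pi} \<theta> \<partial>lborel)"
    by (simp only: inner)
  also have "\<dots> = (\<integral>\<^sup>+w. F w \<partial>lborel) * ennreal (2*pi)"
    by (simp add: nn_integral_cmult_indicator mult.commute)
  finally show ?thesis by (simp add: R_def ac_simps)
qed

section \<open>From circles to balls\<close>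

lemma ennreal_le_circle_integral:
  fixes g :: "complex^'n::finite \<Rightarrow> real"
  assumes c: "0 \<le> c" and g_nonneg: "\<And>w. 0 \<le> g w" and g_cont: "continuous_on (ball z r) g"
    and v: "norm v < r"
    and circle: "2*pi * g z \<le> c * integral {0..2*pi} (\<lambda>\<theta>. g (z + cscale (cis \<theta>) v))"
  shows "ennreal (2*pi * g z) \<le> ennreal c * (\<integral>\<^sup>+\<theta>. ennreal (g (z + cscale (cis \<theta>) v)) * indicator {0..2*pi} \<theta> \<partial>lborel)"
proof -
  define f where "f \<theta> = g (z + cscale (cis \<theta>) v)" for \<theta>
  have "continuous_on {0..2*pi} (\<lambda>\<theta>. z + cscale (cis \<theta>) v)"
    using continuous_on_rotation_about_slices(2)[of _ z "v + z"] by simp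
  moreover have "(\<lambda>\<theta>. z + cscale (cis \<theta>) v) ` {0..2*pi} \<subseteq> ball z r"
    using v by (auto simp: dist_norm norm_cscale)
  ultimately have "f integrable_on {0..2*pi}"
    unfolding f_def by (intro integrable_continuous_interval continuous_on_compose2[OF g_cont])
  then have int: "(f has_integral integral {0..2*pi} f) {0..2*pi}" and int_nonneg: "0 \<le> integral {0..2*pi} f"
    using g_nonneg by (auto simp: f_def intro: integrable_integral integral_nonneg)
  have "ennreal (2*pi * g z) \<le> ennreal c * ennreal (integral {0..2*pi} f)"
  proof -
    have "2*pi * g z \<le> c * integral {0..2*pi} f" using circle by (simp add: f_def[abs_def])
    then show ?thesis using c int_nonneg by (simp add: ennreal_mult[symmetric] ennreal_leI)
  qed
  also have "ennreal (integral {0..2*pi} f) = (\<integral>\<^sup>+\<theta>. ennreal (f \<theta>) * indicator {0..2*pi} \<theta> \<partial>lborel)"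
    by (rule nn_integral_has_integral_lebesgue'[OF _ int, symmetric]) (simp add: f_def g_nonneg)
  finally show ?thesis by (simp add: f_def)
qed

lemma ennreal_le_divide_of_mult_le:
  fixes a m x c :: real and I :: ennreal
  assumes "0 < a" "0 < m" "0 \<le> x" "0 \<le> c"
    and "ennreal (a * x) * ennreal m \<le> ennreal c * (ennreal a * I)"
  shows "ennreal x \<le> ennreal (c / m) * I"
proof -
  have "ennreal x = ennreal (1 / (a * m)) * (ennreal (a * x) * ennreal m)"
    using assms(1-3) by (simp add: ennreal_mult[symmetric] field_simps)
  also have "\<dots> \<le> ennreal (1 / (a * m)) * (ennreal c * (ennreal a * I))"
    by (rule mult_left_mono[OF assms(5)]) simp
  also have "\<dots> = (ennreal (1 / (a * m)) * ennreal c * ennreal a) * I"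
    by (simp only: ac_simps)
  also have "ennreal (1 / (a * m)) * ennreal c * ennreal a = ennreal (c / m)"
    using assms(1,2,4) by (simp add: ennreal_mult[symmetric])
  finally show ?thesis .
qed

lemma ball_average_ge_of_circle_averages:
  fixes g :: "complex^'n::finite \<Rightarrow> real"
  assumes r: "0 < r" and c: "0 \<le> c" and g_nonneg: "\<And>w. 0 \<le> g w" and g_cont: "continuous_on (ball z r) g"
    and circle: "\<And>v. norm v < r \<Longrightarrow>
      2*pi * g z \<le> c * integral {0..2*pi} (\<lambda>\<theta>. g (z + cscale (cis \<theta>) v))"
  shows "ennreal (g z) \<le> ennreal (c / measure lborel (ball z r)) * (\<integral>\<^sup>+w\<in>ball z r. ennreal (g w) \<partial>lborel)"
proof -
  define B where "B = ball z r"
  define F where "F w = ennreal (g w) * indicator B w" for w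
  define R where "R \<theta> w = z + cscale (cis \<theta>) (w - z)" for \<theta> w
  have "(\<lambda>w. indicator B w *\<^sub>R g w) \<in> borel_measurable borel"
    by (rule borel_measurable_continuous_on_indicator) (use g_cont in \<open>auto simp: B_def\<close>)
  moreover have F_eq: "F = (\<lambda>w. ennreal (indicator B w *\<^sub>R g w))"
    by (auto simp: F_def indicator_def fun_eq_iff)
  ultimately have F: "F \<in> borel_measurable borel" by simp
  have pointwise: "ennreal (2*pi * g z) * indicator B w
      \<le> ennreal c * (\<integral>\<^sup>+\<theta>. F (R \<theta> w) * indicator {0..2*pi} \<theta> \<partial>lborel)" for w
  proof (cases "w \<in> B")
    case True
    then have v: "norm (w - z) < r" by (simp add: B_def dist_norm norm_minus_commute)
    have "R \<theta> w \<in> B" for \<theta>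
      using True by (simp add: R_def B_def dist_norm norm_cscale norm_minus_commute)
    then have "(\<integral>\<^sup>+\<theta>. ennreal (g (R \<theta> w)) * indicator {0..2*pi} \<theta> \<partial>lborel)
        = (\<integral>\<^sup>+\<theta>. F (R \<theta> w) * indicator {0..2*pi} \<theta> \<partial>lborel)"
      by (simp add: F_def)
    moreover have "indicator B w = (1::ennreal)" using True by simp
    ultimately show ?thesis
      using ennreal_le_circle_integral[OF c g_nonneg g_cont v circle[OF v]] by (simp add: R_def)
  next
    case False
    then have "indicator B w = (0::ennreal)" by simp
    then show ?thesis by simp
  qed
  define m where "m = measure lborel B"
  have m: "0 < m" unfolding m_def B_def using content_ball_pos[OF r] by simp
  have "emeasure lborel B = ennreal m"
    unfolding m_def B_def
    by (rule emeasure_eq_ennreal_measure) (use emeasure_lborel_ball_finite[of z r] in auto)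
  then have "ennreal (2*pi * g z) * ennreal m = (\<integral>\<^sup>+w. ennreal (2*pi * g z) * indicator B w \<partial>lborel)"
    by (simp add: nn_integral_cmult_indicator B_def)
  also have "\<dots> \<le> (\<integral>\<^sup>+w. ennreal c * (\<integral>\<^sup>+\<theta>. F (R \<theta> w) * indicator {0..2*pi} \<theta> \<partial>lborel) \<partial>lborel)"
    by (rule nn_integral_mono) (rule pointwise)
  also have "\<dots> = ennreal c * (\<integral>\<^sup>+w. (\<integral>\<^sup>+\<theta>. F (R \<theta> w) * indicator {0..2*pi} \<theta> \<partial>lborel) \<partial>lborel)"
    using lborel.borel_measurable_nn_integral[OF borel_measurable_rotation_integrand[OF F, of z]]
    by (intro nn_integral_cmult) (simp add: R_def)
  also have "\<dots> = ennreal c * (ennreal (2*pi) * (\<integral>\<^sup>+w. F w \<partial>lborel))"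
    unfolding R_def nn_integral_circle_rotations[OF F] ..
  finally have main: "ennreal (2*pi * g z) * ennreal m \<le> ennreal c * (ennreal (2*pi) * (\<integral>\<^sup>+w. F w \<partial>lborel))" .
  show ?thesis
    using ennreal_le_divide_of_mult_le[OF _ m g_nonneg c main] by (simp add: F_def m_def B_def)
qed

lemma has_derivative_complex_line:
  "((\<lambda>l. z + cscale l v) has_derivative (\<lambda>w. cscale w v)) (at l)"
proof -
  have "((\<lambda>l. z + (Re l *\<^sub>R v + Im l *\<^sub>R cscale \<i> v)) has_derivative (\<lambda>w. Re w *\<^sub>R v + Im w *\<^sub>R cscale \<i> v)) (at l)"
    by (auto intro!: derivative_eq_intros)
  then show ?thesis by (subst (asm) (1 2) cscale_decomp[symmetric])
qed

lemma holomorphic_on_complex_line: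
  assumes "holomorphic_n h U"
  shows "(\<lambda>l. h (z + cscale l v)) holomorphic_on {l. z + cscale l v \<in> U}"
  unfolding holomorphic_on_def
proof
  fix l assume "l \<in> {l. z + cscale l v \<in> U}"
  then obtain L where L: "(h has_derivative L) (at (z + cscale l v))" "\<And>c w. L (cscale c w) = c * L w"
    using assms unfolding holomorphic_n_def by blast
  have "((\<lambda>l. h (z + cscale l v)) has_derivative (\<lambda>w. L v * w)) (at l)"
    using diff_chain_at[OF has_derivative_complex_line L(1)] by (simp add: o_def L(2) mult.commute)
  then have "((\<lambda>l. h (z + cscale l v)) has_field_derivative L v) (at l)"
    by (simp add: has_field_derivative_def)
  then show "(\<lambda>l. h (z + cscale l v)) field_differentiable at l within {l. z + cscale l v \<in> U}"
    using field_differentiable_at_within field_differentiable_def by blast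
qed

lemma holomorphic_n_imp_continuous_on: "holomorphic_n h U \<Longrightarrow> continuous_on U h"
  unfolding holomorphic_n_def
  by (meson continuous_at_imp_continuous_on has_derivative_continuous)

lemma C2_imp_continuous_on: "C2 \<phi> \<Longrightarrow> continuous_on UNIV \<phi>"
  unfolding C2_def by (meson continuous_at_imp_continuous_on has_derivative_continuous)

lemma levi_form_complex_line_le:
  fixes \<phi> :: "complex ^ 'n :: finite \<Rightarrow> real"
  assumes C: "C2 \<phi>" and psh: "plurisubharmonic \<phi>" and r: "0 < r" "r \<le> rho \<phi> z"
    and x: "x \<in> ball z r" and v: "norm v < r"
  shows "d2 \<phi> x v v + d2 \<phi> x (cscale \<i> v) (cscale \<i> v) \<le> 2 * (real DIM(complex^'n))\<^sup>2"
proof -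
  obtain Df D2f where "\<And>x. (\<phi> has_derivative blinfun_apply (Df x)) (at x)"
    and "\<And>x. (Df has_derivative blinfun_apply (D2f x)) (at x)"
    using C unfolding C2_def by blast
  note d2 = d2_eq_second_derivative[OF this, of x]
  define K where "K = (real DIM(complex^'n))\<^sup>2"
  have K: "0 \<le> K" by (simp add: K_def)
  have "d2 \<phi> x v v + d2 \<phi> x (cscale \<i> v) (cscale \<i> v) \<le> 2 * K * ((norm v)\<^sup>2 * laplacian \<phi> x)"
    using levi_form_le_laplacian[OF psh d2, of v] by (simp add: d2 K_def mult_ac)
  moreover have "(norm v)\<^sup>2 * laplacian \<phi> x \<le> 1"
  proof (cases "laplacian \<phi> x \<le> 0")
    case True
    then show ?thesis by (simp add: mult_nonneg_nonpos order_trans[OF _ zero_le_one])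
  next
    case False
    have "(norm v)\<^sup>2 * laplacian \<phi> x \<le> r\<^sup>2 * (1 / r\<^sup>2)"
      using False laplacian_le_inverse_square[OF C r x] v by (intro mult_mono power_mono) auto
    then show ?thesis using r by simp
  qed
  ultimately show ?thesis using K unfolding K_def[symmetric] by (smt (verit) mult_left_le)
qed

text \<open>The factor \<open>exp (K |l|^2)\<close> compensates for the Laplacian of \<open>-2\<phi>\<close> along the line,
  which is bounded below by \<open>-4K\<close>.\<close>
lemma sub_mean_value_complex_circle:
  fixes \<phi> :: "complex^'n::finite \<Rightarrow> real" and h :: "complex^'n \<Rightarrow> complex"
  assumes C: "C2 \<phi>" and psh: "plurisubharmonic \<phi>" and r: "0 < r" "r \<le> rho \<phi> z"
    and hol: "holomorphic_n h (ball z r)" and v: "norm v < r"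
  shows "2*pi * ((cmod (h z))\<^sup>2 * exp (- 2 * \<phi> z)) \<le> exp ((real DIM(complex^'n))\<^sup>2) *
    integral {0..2*pi} (\<lambda>\<theta>. (cmod (h (z + cscale (cis \<theta>) v)))\<^sup>2 * exp (- 2 * \<phi> (z + cscale (cis \<theta>) v)))"
proof -
  define K where "K = (real DIM(complex^'n))\<^sup>2"
  obtain Df D2f where Df: "\<And>x. (\<phi> has_derivative blinfun_apply (Df x)) (at x)"
    and D2f: "\<And>x. (Df has_derivative blinfun_apply (D2f x)) (at x)" and cD: "continuous_on UNIV D2f"
    using C unfolding C2_def by blast
  define S where "S = {l. z + cscale l v \<in> ball z r}"
  have "continuous_on UNIV (\<lambda>l. z + cscale l v)"
    by (intro continuous_at_imp_continuous_on ballI has_derivative_continuous[OF has_derivative_complex_line])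
  then have S: "open S"
    unfolding S_def by (rule open_vimage[OF open_ball, unfolded vimage_def])
  have disc: "cball 0 1 \<subseteq> S"
  proof
    fix l :: complex assume "l \<in> cball 0 1"
    then have "cmod l * norm v \<le> norm v" by (simp add: mult_left_le_one_le)
    then show "l \<in> S" using v by (simp add: S_def dist_norm norm_cscale)
  qed
  have "(\<lambda>l. h (z + cscale l v)) holomorphic_on S"
    unfolding S_def by (rule holomorphic_on_complex_line[OF hol])
  note C2 = C2_partials_mult[OF C2_partials_holomorphic_cmod_power2[OF this S]
      C2_partials_exp[OF C2_partials_lincomb[OF C2_partials_complex_line[OF Df D2f cD, where S=S and z=z and v=v]
      C2_partials_cmod_power2 S, of "-2" K] S] S]
  have lap: "0 \<le> (-2 * blinfun_apply (blinfun_apply (D2f (z + cscale p v)) v) v + K * 2)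
     + (-2 * blinfun_apply (blinfun_apply (D2f (z + cscale p v)) (cscale \<i> v)) (cscale \<i> v) + K * 2)"
    if "p \<in> S" for p
    using levi_form_complex_line_le[OF C psh r _ v, of "z + cscale p v"] that
    by (simp add: S_def K_def d2_eq_second_derivative[OF Df D2f])
  have "2*pi * ((cmod (h (z + cscale 0 v)))\<^sup>2 * exp (-2 * \<phi> (z + cscale 0 v) + K * (cmod 0)\<^sup>2)) \<le>
      integral {0..2*pi} (\<lambda>\<theta>. (cmod (h (z + cscale (cis \<theta>) v)))\<^sup>2 * exp (-2 * \<phi> (z + cscale (cis \<theta>) v) + K * (cmod (cis \<theta>))\<^sup>2))"
    by (rule C2_subharmonic_disc.sub_mean_value[OF C2_subharmonic_disc.intro[OF C2 S disc]],
        rule laplacian_cmod_power2_exp_nonneg) (simp, drule lap, linarith, simp add: cmod_power2)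
  also have "\<dots> = integral {0..2*pi} (\<lambda>\<theta>. exp K * ((cmod (h (z + cscale (cis \<theta>) v)))\<^sup>2 * exp (- 2 * \<phi> (z + cscale (cis \<theta>) v))))"
    by (intro integral_cong) (simp add: mult_exp_exp algebra_simps)
  also have "\<dots> = exp K * integral {0..2*pi} (\<lambda>\<theta>. (cmod (h (z + cscale (cis \<theta>) v)))\<^sup>2 * exp (- 2 * \<phi> (z + cscale (cis \<theta>) v)))"
    by simp
  finally show ?thesis by (simp add: K_def)
qed

theorem mainTheorem14:
  fixes \<phi> :: "complex ^ 'n :: finite \<Rightarrow> real"
  assumes "admissible \<phi>"
  shows "\<exists>C::real. \<forall>z r (h :: complex ^ 'n \<Rightarrow> complex).
           0 < r \<longrightarrow> r \<le> rho \<phi> z \<longrightarrow> holomorphic_n h (ball z r) \<longrightarrow>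
           ennreal ((cmod (h z))\<^sup>2 * exp (- 2 * \<phi> z))
             \<le> ennreal (C / measure lborel (ball z r)) *
               (\<integral>\<^sup>+ w \<in> ball z r. ennreal ((cmod (h w))\<^sup>2 * exp (- 2 * \<phi> w)) \<partial>lborel)"
proof (intro exI allI impI)
  have C: "C2 \<phi>" and psh: "plurisubharmonic \<phi>"
    using assms by (auto simp: admissible_def)
  fix z r and h :: "complex ^ 'n \<Rightarrow> complex"
  assume r: "0 < r" "r \<le> rho \<phi> z" and hol: "holomorphic_n h (ball z r)"
  have cont: "continuous_on (ball z r) (\<lambda>w. (cmod (h w))\<^sup>2 * exp (- 2 * \<phi> w))"
    using holomorphic_n_imp_continuous_on[OF hol] continuous_on_subset[OF C2_imp_continuous_on[OF C]]
    by (intro continuous_intros) auto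
  show "ennreal ((cmod (h z))\<^sup>2 * exp (- 2 * \<phi> z))
      \<le> ennreal (exp ((real DIM(complex^'n))\<^sup>2) / measure lborel (ball z r)) *
        (\<integral>\<^sup>+ w \<in> ball z r. ennreal ((cmod (h w))\<^sup>2 * exp (- 2 * \<phi> w)) \<partial>lborel)"
    by (rule ball_average_ge_of_circle_averages[OF r(1) _ _ cont sub_mean_value_complex_circle[OF C psh r hol]])
      simp_all
qed

end
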